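(* Let $z\in\mathbb C$. Then \[\sum_{m=1}^\infty\frac{d_z(m)}mH_m(1)=\frac{\mathbb E(L(1,\mathbb X)^z)}{\zeta(2)}\qquad\text{and}\qquad\sum_{m=1}^\infty\frac{d_z(m)}mH_m'(1)=\frac{\mathbb E(L(1,\mathbb X)^z)}{\zeta(2)}(\phi(z)-2\gamma).\]
   Context: $d_z$ is the multiplicative function with $d_z(p^\nu)=\Gamma(z+\nu)/(\Gamma(z)\nu!)$. Write $m=2^{e_1}p_2^{e_2}\cdots p_r^{e_r}$ ($e_1\ge0$, $p_j$ distinct odd primes, $e_j\ge1$), $m_0$ the squarefree part of $m/2^{e_1}$, $\omega(m_0)$ its number of prime factors; define \[h_m(s)=\frac{(-1)^{\omega(m_0)}}{m_0}\,\frac{\prod_{2\le j\le r,\ e_j\text{ even}}\bigl(1-\frac2{p_j}\bigr)\bigl(1+\frac{2(p_j-1)}{(p_j-2)(p_j^s-1)}\bigr)}{\prod_{p\mid m}\bigl(1+\frac2{p^s-1}\bigr)}\,\tilde\kappa(m,s),\] with $\tilde\kappa(m,s)=1$ if $m$ is odd and $\tilde\kappa(m,s)=\frac{(-1)^{e_1}}2\frac{8^s+4^s}{8^s+2^s+2}\bigl(1+\frac{2(1+(-1)^{e_1})}{4^s(2^s-1)}\bigr)$ if $m$ is even, and $H_m(s)=\frac{8^s+2^s+2}{8^s+4^s}\frac{h_m(s)}{\zeta(2s)}$; $H_m'$ is the derivative in $s$. $(\mathbb X(p))_p$ are independent random variables indexed by primes with $\mathbb P(\mathbb X(p)=1)=\frac{(p-1)^2}{2p(p+1)}$,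 $\mathbb P(\mathbb X(p)=-1)=\frac{p-1}{2p}$, $\mathbb P(\mathbb X(p)=0)=\frac2{p+1}$; $\mathbb E(L(1,\mathbb X)^z):=\prod_p\mathbb E((1-\mathbb X(p)/p)^{-z})$. $\gamma$ is the Euler–Mascheroni constant and \[\phi(z)=\sum_{p\ge3}\frac{\frac{2\log p}{(p+1)^2}\bigl(1-(1-\frac1p)^{-z}\bigr)}{\mathbb E\bigl((1-\frac{\mathbb X(p)}{p})^{-z}\bigr)}-\frac{\log 2}{9}\,\frac{4\cdot 2^z+5}{\frac16 2^z+\frac12(\frac23)^z+\frac43}-\frac{2\zeta'(2)}{\zeta(2)}+2\gamma,\] where, if $\phi(z)$ is undefined, $\mathbb E(L(1,\mathbb X)^z)\phi(z)$ is interpreted by cancelling the vanishing factor. *)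

theory Defs
  imports "HOL-Complex_Analysis.Complex_Analysis" "HOL-Computational_Algebra.Computational_Algebra"
begin

(* Generalised divisor function d_z, multiplicative with
   d_z(p^nu) = Gamma(z+nu)/(Gamma(z) nu!) = pochhammer z nu / nu!
   (the pochhammer form is the standard meaning of the Gamma quotient, valid for all z). *)
definition dz :: "complex \<Rightarrow> nat \<Rightarrow> complex" where
  "dz z m = (\<Prod>p\<in>prime_factors m. pochhammer z (multiplicity p m) / fact (multiplicity p m))"

(* Riemann zeta function on Re s > 1 (only used at and near s = 2) *)
definition zeta :: "complex \<Rightarrow> complex" where
  "zeta s = (\<Sum>n. 1 / (of_nat (Suc n)) powr s)"

definition e1 :: "nat \<Rightarrow> nat" where
  "e1 m = multiplicity 2 m"

definition odd_exp_primes :: "nat \<Rightarrow> nat set" where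
  "odd_exp_primes m = {p \<in> prime_factors m. p \<noteq> 2 \<and> odd (multiplicity p m)}"

definition even_exp_primes :: "nat \<Rightarrow> nat set" where
  "even_exp_primes m = {p \<in> prime_factors m. p \<noteq> 2 \<and> even (multiplicity p m)}"

(* m_0 = squarefree part of m / 2^e_1 *)
definition m0 :: "nat \<Rightarrow> nat" where
  "m0 m = \<Prod>(odd_exp_primes m)"

definition kappa :: "nat \<Rightarrow> complex \<Rightarrow> complex" where
  "kappa m s = (if odd m then 1 else
     (-1) ^ e1 m / 2 * ((8 powr s + 4 powr s) / (8 powr s + 2 powr s + 2))
       * (1 + 2 * (1 + (-1) ^ e1 m) / (4 powr s * (2 powr s - 1))))"

definition hm :: "nat \<Rightarrow> complex \<Rightarrow> complex" where
  "hm m s = (-1) ^ card (prime_factors (m0 m)) / of_nat (m0 m)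
     * ((\<Prod>p\<in>even_exp_primes m. (1 - 2 / of_nat p)
            * (1 + 2 * (of_nat p - 1) / ((of_nat p - 2) * (of_nat p powr s - 1))))
        / (\<Prod>p\<in>prime_factors m. 1 + 2 / (of_nat p powr s - 1)))
     * kappa m s"

definition Hm :: "nat \<Rightarrow> complex \<Rightarrow> complex" where
  "Hm m s = (8 powr s + 2 powr s + 2) / (8 powr s + 4 powr s) * hm m s / zeta (2 * s)"

(* E((1 - X(p)/p)^(-z)) for the random variable X(p) *)
definition EXp :: "nat \<Rightarrow> complex \<Rightarrow> complex" where
  "EXp p z = of_real ((real p - 1)^2 / (2 * real p * (real p + 1))) * of_real (1 - 1 / real p) powr (-z)
          + of_real ((real p - 1) / (2 * real p)) * of_real (1 + 1 / real p) powr (-z)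
          + of_real (2 / (real p + 1))"

(* E(L(1,X)^z) = prod over primes *)
definition EL :: "complex \<Rightarrow> complex" where
  "EL z = (\<Prod>n. if prime n then EXp n z else 1)"

definition aphi :: "nat \<Rightarrow> complex \<Rightarrow> complex" where
  "aphi p z = of_real (2 * ln (real p) / (real p + 1)^2) * (1 - of_real (1 - 1 / real p) powr (-z))"

definition phi :: "complex \<Rightarrow> complex" where
  "phi z = (\<Sum>n. if prime n \<and> n \<ge> 3 then aphi n z / EXp n z else 0)
     - of_real (ln 2 / 9) * (4 * 2 powr z + 5) / (1/6 * 2 powr z + 1/2 * (2/3) powr z + 4/3)
     - 2 * deriv zeta 2 / zeta 2 + 2 * euler_mascheroni"

(* E(L(1,X)^z) * phi(z), where, if phi(z) is undefined (some factor EXp p z vanishes),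
   the product is interpreted by cancelling the vanishing factor.  Note
   1/6*2^z + 1/2*(2/3)^z + 4/3 = 2 * EXp 2 z. *)
definition EL_phi :: "complex \<Rightarrow> complex" where
  "EL_phi z = (if (\<forall>p. prime p \<longrightarrow> EXp p z \<noteq> 0) then EL z * phi z else
      (\<Sum>n. if prime n \<and> n \<ge> 3 then aphi n z * (\<Prod>q. if prime q \<and> q \<noteq> n then EXp q z else 1) else 0)
      - of_real (ln 2 / 9) * (4 * 2 powr z + 5) / 2 * (\<Prod>q. if prime q \<and> q \<noteq> 2 then EXp q z else 1)
      + (- 2 * deriv zeta 2 / zeta 2 + 2 * euler_mascheroni) * EL z)"

end

(* For m = p_1^k_1 ... p_r^k_r the coefficient d_z(m)/m * h_m(s) is multiplicative in m, since h_m(s)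
   is a product of local factors g_p(k, s). At s = 1 one has g_p(k, 1) = P(X(p) = 1) + P(X(p) = -1) (-1)^k,
   so by the negative binomial series the Euler factor at p is
     sum_k d_z(p^k) p^-k g_p(k, 1) = P(X(p) = 1) (1 - 1/p)^-z + P(X(p) = -1) (1 + 1/p)^-z + P(X(p) = 0),
   i.e. E((1 - X(p)/p)^-z). The local series converge absolutely with sums 1 + O(|z| 2^|z| / p^2), so the
   Dirichlet series is the Euler product E(L(1, X)^z); the prefactor (8^s + 2^s + 2)/(8^s + 4^s) is 1 at
   s = 1 and 1/zeta(2s) contributes 1/zeta(2).
   For the derivative, the product rule replaces one local factor g_p(k, s) by its derivative at 1, which
   again has the form a_p + b_p (-1)^k. Summing first over the multiples of p and then over p yields
   sum_p G_p prod_(q <> p) E((1 - X(q)/q)^-z), where G_p = sum_k d_z(p^k) p^-k (a_p + b_p (-1)^k). For odd p,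
   G_p is the numerator of the p-th term of phi; at p = 2 it combines with the derivatives of the prefactor
   and of 1/zeta(2s) into the remaining terms of phi. *)

theory Submission
  imports Defs
begin

section \<open>Euler products of multiplicative functions\<close>

definition multiplicative_fun :: "(nat \<Rightarrow> nat \<Rightarrow> 'a::comm_monoid_mult) \<Rightarrow> nat \<Rightarrow> 'a" where
  "multiplicative_fun f m = (\<Prod>p\<in>prime_factors m. f p (multiplicity p m))"

lemma prime_factors_prod_prime_powers:
  assumes "finite P" "\<And>p. p \<in> P \<Longrightarrow> prime (p::nat)"
  shows "prime_factors (\<Prod>p\<in>P. p ^ g p) = {p\<in>P. g p > 0}"
proof (rule set_eqI)
  fix q
  show "q \<in> prime_factors (\<Prod>p\<in>P. p ^ g p) \<longleftrightarrow> q \<in> {p\<in>P. g p > 0}"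
  proof (cases "prime q")
    case True
    then show ?thesis
      using multiplicity_prod_prime_powers[OF assms True, of g]
      by (auto simp: prime_factors_multiplicity)
  next
    case False
    then show ?thesis using assms(2) by (auto simp: prime_factors_multiplicity)
  qed
qed

lemma prime_factors_le: "q \<in> prime_factors m \<Longrightarrow> q \<le> (m::nat)"
  using dvd_imp_le[of q m] by (auto simp: in_prime_factors_iff)

lemma bij_betw_prod_prime_powers:
  assumes "finite P" "\<And>p. p \<in> P \<Longrightarrow> prime (p::nat)"
  shows "bij_betw (\<lambda>g. \<Prod>p\<in>P. p ^ g p) (PiE P (\<lambda>_. UNIV)) {m. m > 0 \<and> prime_factors m \<subseteq> P}"
proof (rule bij_betwI[where g = "\<lambda>m. restrict (\<lambda>p. multiplicity p m) P"])
  show "(\<lambda>g. \<Prod>p\<in>P. p ^ g p) \<in> PiE P (\<lambda>_. UNIV) \<rightarrow> {m. m > 0 \<and> prime_factors m \<subseteq> P}"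
    using assms by (auto simp: prime_factors_prod_prime_powers prime_gt_0_nat)
  show "restrict (\<lambda>p. multiplicity p (\<Prod>p\<in>P. p ^ g p)) P = g" if "g \<in> PiE P (\<lambda>_. UNIV)" for g
    using that multiplicity_prod_prime_powers[OF assms, of _ g] assms
    by (auto simp: fun_eq_iff PiE_def extensional_def)
  show "(\<Prod>p\<in>P. p ^ restrict (\<lambda>p. multiplicity p m) P p) = m"
    if "m \<in> {m. m > 0 \<and> prime_factors m \<subseteq> P}" for m
  proof -
    have "(\<Prod>p\<in>P. p ^ restrict (\<lambda>p. multiplicity p m) P p) = (\<Prod>p\<in>P. p ^ multiplicity p m)"
      by (rule prod.cong) auto
    also have "\<dots> = (\<Prod>p\<in>prime_factors m. p ^ multiplicity p m)"
      using that assms by (intro prod.mono_neutral_right) (auto simp: prime_factors_multiplicity)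
    also have "\<dots> = m" using that by (simp add: prod_prime_factors)
    finally show ?thesis .
  qed
qed auto

lemma multiplicative_fun_prod_prime_powers:
  assumes "finite P" "\<And>p. p \<in> P \<Longrightarrow> prime (p::nat)" "\<And>p. f p 0 = 1"
  shows "multiplicative_fun f (\<Prod>p\<in>P. p ^ g p) = (\<Prod>p\<in>P. f p (g p))"
proof -
  have "multiplicative_fun f (\<Prod>p\<in>P. p ^ g p) = (\<Prod>p\<in>{p\<in>P. g p > 0}. f p (g p))"
    unfolding multiplicative_fun_def
    using multiplicity_prod_prime_powers[OF assms(1,2), of _ g] assms(2)
    by (intro prod.cong[OF prime_factors_prod_prime_powers[OF assms(1,2)]]) auto
  also have "\<dots> = (\<Prod>p\<in>P. f p (g p))"
    using assms by (intro prod.mono_neutral_left) auto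
  finally show ?thesis .
qed

lemma norm_multiplicative_fun:
  "norm (multiplicative_fun f m) = multiplicative_fun (\<lambda>p k. norm (f p k :: 'a::real_normed_field)) m"
  unfolding multiplicative_fun_def by (simp add: prod_norm)

lemma infsum_tail_tendsto_0:
  fixes a :: "nat \<Rightarrow> real"
  assumes "a summable_on A"
  shows "(\<lambda>N. infsum a (A \<inter> {N..})) \<longlonglongrightarrow> 0"
proof -
  define b where "b m = (if m \<in> A then a m else 0)" for m
  have "a summable_on A \<longleftrightarrow> b summable_on UNIV"
    by (rule summable_on_cong_neutral) (auto simp: b_def)
  with assms have b: "b summable_on UNIV" by simp
  have tail: "infsum a (A \<inter> {N..}) = infsum b UNIV - (\<Sum>m<N. b m)" for N
  proof -
    have "infsum a (A \<inter> {N..}) = infsum b (UNIV - {..<N})"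
      unfolding b_def by (rule infsum_cong_neutral) auto
    also have "\<dots> = infsum b UNIV - infsum b {..<N}"
      by (rule infsum_Diff[OF b]) auto
    finally show ?thesis by simp
  qed
  have "(\<lambda>N. infsum b UNIV - (\<Sum>m<N. b m)) \<longlonglongrightarrow> infsum b UNIV - infsum b UNIV"
    using has_sum_imp_sums[OF has_sum_infsum[OF b]] unfolding sums_def by (intro tendsto_intros)
  then show ?thesis unfolding tail by simp
qed

lemma has_sum_imp_sums_Suc:
  fixes a :: "nat \<Rightarrow> 'a::{topological_comm_monoid_add,t2_space}"
  assumes "(a has_sum S) {0<..}"
  shows "(\<lambda>m. a (Suc m)) sums S"
proof -
  have "bij_betw Suc UNIV {0<..}"
    by (rule bij_betwI[where g = "\<lambda>n. n - 1"]) auto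
  then have "((\<lambda>m. a (Suc m)) has_sum S) UNIV"
    using has_sum_reindex_bij_betw[of Suc UNIV "{0<..}" a] assms by simp
  then show ?thesis by (rule has_sum_imp_sums)
qed

lemma convergent_prod_if_norm_minus_1_le:
  fixes F :: "nat \<Rightarrow> 'a::{real_normed_field,banach}"
  assumes "\<And>n. norm (F n - 1) \<le> \<beta> n" "summable \<beta>"
  shows "convergent_prod F"
  using assms
  by (intro abs_convergent_prod_imp_convergent_prod summable_imp_abs_convergent_prod
        summable_comparison_test'[OF assms(2)]) auto

lemma prodinf_eq_mult_prodinf_fun_upd:
  fixes F :: "nat \<Rightarrow> 'a::{real_normed_field,banach}"
  assumes "\<And>n. norm (F n - 1) \<le> \<beta> n" "summable \<beta>" "\<And>n. \<beta> n \<ge> 0"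
  shows "prodinf F = F n * prodinf (F(n := 1))"
proof -
  have "convergent_prod (F(n := 1))"
    by (rule convergent_prod_if_norm_minus_1_le[OF _ assms(2)]) (use assms in auto)
  then have "prodinf (F(n := 1)) * prodinf (\<lambda>q. if q \<in> {n} then F q else 1)
      = prodinf (\<lambda>q. (F(n := 1)) q * (if q \<in> {n} then F q else 1))"
    by (intro prodinf_mult) auto
  also have "(\<lambda>q. (F(n := 1)) q * (if q \<in> {n} then F q else 1)) = F"
    by (auto simp: fun_eq_iff)
  also have "prodinf (\<lambda>q. if q \<in> {n} then F q else 1) = F n"
    by (subst prodinf_finite[of "{n}"]) auto
  finally have "prodinf (F(n := 1)) * F n = prodinf F" .
  then show ?thesis by (metis mult.commute)
qed

lemma has_sum_mult_Times:
  fixes u :: "'b \<Rightarrow> 'a::{real_normed_field,banach,second_countable_topology}" and w :: "'c \<Rightarrow> 'a"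
  assumes u: "(u has_sum U) A" "(\<lambda>x. norm (u x)) summable_on A"
    and w: "(w has_sum W) B" "(\<lambda>x. norm (w x)) summable_on B"
  shows "((\<lambda>(x,y). u x * w y) has_sum U * W) (A \<times> B)"
proof (rule has_sum_SigmaI[where g = "\<lambda>x. u x * W"])
  have inner: "(\<lambda>y. norm (u x * w y)) summable_on B" for x
    using summable_on_cmult_right[OF w(2), of "norm (u x)"] by (simp add: norm_mult)
  have inner_sum: "infsum (\<lambda>y. norm (u x * w y)) B = norm (u x) * infsum (\<lambda>y. norm (w y)) B" for x
    by (simp add: norm_mult infsum_cmult_right')
  have "(\<lambda>x. norm (infsum (\<lambda>y. norm (u x * w y)) B)) summable_on A"
    using summable_on_cmult_left[OF u(2)] by (simp add: inner_sum infsum_nonneg)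
  then have "(\<lambda>z. norm ((\<lambda>(x,y). u x * w y) z)) summable_on Sigma A (\<lambda>_. B)"
    using Infinite_Sum.abs_summable_on_Sigma_iff[where f="\<lambda>(x,y). u x * w y" and A=A and B="\<lambda>_. B"]
      inner by auto
  then show "(\<lambda>(x,y). u x * w y) summable_on Sigma A (\<lambda>_. B)"
    by (rule Infinite_Sum.abs_summable_summable)
  show "((\<lambda>y. (\<lambda>(x,y). u x * w y) (x, y)) has_sum u x * W) B" for x
    using has_sum_cmult_right[OF w(1), of "u x"] by simp
  show "((\<lambda>x. u x * W) has_sum U * W) A"
    by (rule has_sum_cmult_left[OF u(1)])
qed

lemma bij_betw_prime_power_mult_coprime:
  assumes p: "prime (p::nat)"
  shows "bij_betw (\<lambda>(k,n). p ^ k * n) ({0<..} \<times> {n. n > 0 \<and> \<not> p dvd n}) {m. m > 0 \<and> p dvd m}"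
proof (rule bij_betwI[where g = "\<lambda>m. (multiplicity p m, m div p ^ multiplicity p m)"])
  show "(\<lambda>m. (multiplicity p m, m div p ^ multiplicity p m))
      \<in> {m. m > 0 \<and> p dvd m} \<rightarrow> {0<..} \<times> {n. n > 0 \<and> \<not> p dvd n}"
  proof
    fix m assume m: "m \<in> {m. m > 0 \<and> p dvd m}"
    have "multiplicity p m > 0" using m p by (auto simp: prime_multiplicity_gt_zero_iff)
    moreover have "m div p ^ multiplicity p m > 0"
      using m multiplicity_dvd[of p m] by (auto simp: div_greater_zero_iff intro!: dvd_imp_le)
    moreover have "\<not> p dvd m div p ^ multiplicity p m"
      using m p by (intro multiplicity_decompose) (auto dest: not_prime_unit)
    ultimately show "(multiplicity p m, m div p ^ multiplicity p m) \<in> {0<..} \<times> {n. n > 0 \<and> \<not> p dvd n}"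
      by auto
  qed
  show "(\<lambda>m. (multiplicity p m, m div p ^ multiplicity p m)) ((\<lambda>(k,n). p ^ k * n) x) = x"
    if "x \<in> {0<..} \<times> {n. n > 0 \<and> \<not> p dvd n}" for x
  proof -
    obtain k n where x: "x = (k, n)" by (cases x)
    have "multiplicity p (p ^ k * n) = k"
      by (rule multiplicity_decomposeI) (use that x p in auto)
    then show ?thesis using x p by (simp add: prime_gt_0_nat)
  qed
qed (use p in \<open>auto simp: prime_gt_0_nat multiplicity_dvd\<close>)

lemma prime_power_mult_coprime:
  assumes p: "prime (p::nat)" and k: "k > 0" and n: "n > 0" "\<not> p dvd n"
  shows "prime_factors (p ^ k * n) = insert p (prime_factors n)"
    and "multiplicity p (p ^ k * n) = k"
    and "\<And>q. q \<in> prime_factors n \<Longrightarrow> multiplicity q (p ^ k * n) = multiplicity q n"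
proof -
  show "prime_factors (p ^ k * n) = insert p (prime_factors n)"
    using p k n by (subst prime_factors_product) (auto simp: prime_factorization_prime_power prime_gt_0_nat)
  show "multiplicity p (p ^ k * n) = k"
    by (rule multiplicity_decomposeI) (use p n in auto)
  fix q assume q: "q \<in> prime_factors n"
  then have "q \<noteq> p" using n by (auto simp: in_prime_factors_iff)
  have "multiplicity q (p ^ k * n) = multiplicity q (p ^ k) + multiplicity q n"
    using p q n by (intro prime_elem_multiplicity_mult_distrib) (auto simp: in_prime_factors_iff prime_gt_0_nat)
  also have "multiplicity q (p ^ k) = 0"
    using p q \<open>q \<noteq> p\<close> by (intro multiplicity_distinct_prime_power) (auto simp: in_prime_factors_iff)
  finally show "multiplicity q (p ^ k * n) = multiplicity q n" by simp
qed

locale euler_factors =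
  fixes f :: "nat \<Rightarrow> nat \<Rightarrow> 'a::{real_normed_field,banach,second_countable_topology}"
    and \<beta> :: "nat \<Rightarrow> real"
  assumes factor_0 [simp]: "f p 0 = 1"
    and summable_norm_factor: "prime p \<Longrightarrow> (\<lambda>k. norm (f p k)) summable_on UNIV"
    and norm_factor_sum_le: "prime p \<Longrightarrow> infsum (\<lambda>k. norm (f p k)) UNIV \<le> 1 + \<beta> p"
    and summable_bound: "summable \<beta>"
    and bound_nonneg: "\<beta> p \<ge> 0"
begin

lemma norm_local_sum_minus_1_le:
  "norm ((if prime n then infsum (f n) UNIV else 1) - 1) \<le> \<beta> n"
proof (cases "prime n")
  case True
  note fs = summable_norm_factor[OF True]
  have "infsum (f n) UNIV - 1 = infsum (f n) (UNIV - {0})"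
    using infsum_Diff[OF Infinite_Sum.abs_summable_summable[OF fs], of "{0}"] by simp
  also have "norm \<dots> \<le> infsum (\<lambda>k. norm (f n k)) (UNIV - {0})"
    by (rule norm_infsum_bound, rule summable_on_subset_banach[OF fs]) auto
  also have "\<dots> = infsum (\<lambda>k. norm (f n k)) UNIV - 1"
    using infsum_Diff[OF fs, of "{0}"] by simp
  also have "\<dots> \<le> \<beta> n" using norm_factor_sum_le[OF True] by simp
  finally show ?thesis using True by simp
qed (simp add: bound_nonneg)

lemma convergent_prod_local_sums: "convergent_prod (\<lambda>n. if prime n then infsum (f n) UNIV else 1)"
  by (rule convergent_prod_if_norm_minus_1_le[OF norm_local_sum_minus_1_le summable_bound])

lemma has_sum_multiplicative_fun_smooth:
  assumes P: "finite P" "\<And>p. p \<in> P \<Longrightarrow> prime p"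
  shows "(multiplicative_fun f has_sum (\<Prod>p\<in>P. infsum (f p) UNIV)) {m. m > 0 \<and> prime_factors m \<subseteq> P}"
proof -
  have factor_abs: "Infinite_Set_Sum.abs_summable_on (f p) UNIV" if "p \<in> P" for p
    using summable_norm_factor[OF P(2)[OF that]] abs_summable_equivalent by blast
  have "Infinite_Set_Sum.abs_summable_on (\<lambda>g. \<Prod>p\<in>P. f p (g p)) (PiE P (\<lambda>_. UNIV))"
    by (rule abs_summable_on_prod_PiE) (use P factor_abs in auto)
  then have "(\<lambda>g. \<Prod>p\<in>P. f p (g p)) summable_on PiE P (\<lambda>_. UNIV)"
    by (rule Infinite_Sum.abs_summable_summable[OF abs_summable_equivalent[THEN iffD2]])
  moreover have "infsum (\<lambda>g. \<Prod>p\<in>P. f p (g p)) (PiE P (\<lambda>_. UNIV)) = (\<Prod>p\<in>P. infsum (f p) UNIV)"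
    by (rule infsum_prod_PiE_abs) (use P summable_norm_factor in auto)
  ultimately have "((\<lambda>g. \<Prod>p\<in>P. f p (g p)) has_sum (\<Prod>p\<in>P. infsum (f p) UNIV)) (PiE P (\<lambda>_. UNIV))"
    using has_sum_infsum by metis
  then have "((\<lambda>g. multiplicative_fun f (\<Prod>p\<in>P. p ^ g p)) has_sum (\<Prod>p\<in>P. infsum (f p) UNIV))
      (PiE P (\<lambda>_. UNIV))"
    by (simp add: multiplicative_fun_prod_prime_powers[where f=f, OF P factor_0])
  then show ?thesis
    using has_sum_reindex_bij_betw[OF bij_betw_prod_prime_powers[OF P]] by blast
qed

lemma summable_norm_multiplicative_fun: "(\<lambda>m. norm (multiplicative_fun f m)) summable_on {0<..}"
proof (rule nonneg_bdd_above_summable_on)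
  interpret norm_f: euler_factors "\<lambda>p k. norm (f p k)" \<beta>
    by unfold_locales (use summable_norm_factor norm_factor_sum_le summable_bound bound_nonneg in auto)
  show "bdd_above (sum (\<lambda>m. norm (multiplicative_fun f m)) ` {F. F \<subseteq> {0<..} \<and> finite F})"
  proof (rule bdd_aboveI2)
    fix F :: "nat set" assume F: "F \<in> {F. F \<subseteq> {0<..} \<and> finite F}"
    define P where "P = {p. prime p \<and> p \<le> Max (insert 1 F)}"
    have P: "finite P" "\<And>p. p \<in> P \<Longrightarrow> prime p" by (auto simp: P_def)
    have smooth: "F \<subseteq> {m. m > 0 \<and> prime_factors m \<subseteq> P}"
    proof
      fix m assume m: "m \<in> F"
      then have "m \<le> Max (insert 1 F)" using F by simp
      then have "q \<in> P" if q: "q \<in> prime_factors m" for q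
        using prime_factors_le[OF q] q by (auto simp: P_def in_prime_factors_iff)
      then show "m \<in> {m. m > 0 \<and> prime_factors m \<subseteq> P}" using m F by auto
    qed
    have "sum (\<lambda>m. norm (multiplicative_fun f m)) F
        \<le> (\<Prod>p\<in>P. infsum (\<lambda>k. norm (f p k)) UNIV)"
      unfolding norm_multiplicative_fun
      using F smooth
      by (intro finite_sum_le_has_sum[OF norm_f.has_sum_multiplicative_fun_smooth[OF P]])
         (auto simp: multiplicative_fun_def intro!: prod_nonneg)
    also have "\<dots> \<le> (\<Prod>p\<in>P. exp (\<beta> p))"
    proof (intro prod_mono conjI)
      fix p assume "p \<in> P"
      then have "infsum (\<lambda>k. norm (f p k)) UNIV \<le> 1 + \<beta> p" using P norm_factor_sum_le by blast
      then show "infsum (\<lambda>k. norm (f p k)) UNIV \<le> exp (\<beta> p)"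
        using exp_ge_add_one_self[of "\<beta> p"] by linarith
    qed (auto intro: infsum_nonneg)
    also have "\<dots> = exp (\<Sum>p\<in>P. \<beta> p)" by (simp add: exp_sum P)
    also have "\<dots> \<le> exp (suminf \<beta>)"
      using summable_bound bound_nonneg P by (auto intro!: sum_le_suminf)
    finally show "sum (\<lambda>m. norm (multiplicative_fun f m)) F \<le> exp (suminf \<beta>)" .
  qed
qed auto

lemma tendsto_infsum_smooth:
  "(\<lambda>N. infsum (multiplicative_fun f) {m. m > 0 \<and> prime_factors m \<subseteq> {p. prime p \<and> p < N}})
     \<longlonglongrightarrow> infsum (multiplicative_fun f) {0<..}"
proof -
  define smooth where "smooth N = {m::nat. m > 0 \<and> prime_factors m \<subseteq> {p. prime p \<and> p < N}}" for N
  note abs = summable_norm_multiplicative_fun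
  note summ = Infinite_Sum.abs_summable_summable[OF abs]
  have "norm (infsum (multiplicative_fun f) {0<..} - infsum (multiplicative_fun f) (smooth N))
      \<le> infsum (\<lambda>m. norm (multiplicative_fun f m)) ({0<..} \<inter> {N..})" for N
  proof -
    have "infsum (multiplicative_fun f) {0<..} - infsum (multiplicative_fun f) (smooth N)
        = infsum (multiplicative_fun f) ({0<..} - smooth N)"
      by (rule infsum_Diff[OF summ summable_on_subset_banach[OF summ], symmetric]) (auto simp: smooth_def)
    also have "norm \<dots> \<le> infsum (\<lambda>m. norm (multiplicative_fun f m)) ({0<..} - smooth N)"
      by (rule norm_infsum_bound, rule summable_on_subset_banach[OF abs]) auto
    also have "\<dots> \<le> infsum (\<lambda>m. norm (multiplicative_fun f m)) ({0<..} \<inter> {N..})"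
    proof (rule infsum_mono2)
      show "{0<..} - smooth N \<subseteq> {0<..} \<inter> {N..}"
      proof
        fix m assume m: "m \<in> {0<..} - smooth N"
        then obtain q where q: "q \<in> prime_factors m" "\<not> q < N"
          by (auto simp: smooth_def in_prime_factors_iff)
        then show "m \<in> {0<..} \<inter> {N..}" using m prime_factors_le[OF q(1)] by auto
      qed
    qed (auto intro: summable_on_subset_banach[OF abs])
    finally show ?thesis .
  qed
  then have "(\<lambda>N. infsum (multiplicative_fun f) {0<..} - infsum (multiplicative_fun f) (smooth N))
      \<longlonglongrightarrow> 0"
    by (rule Lim_null_comparison[OF always_eventually[OF allI] infsum_tail_tendsto_0[OF abs]])
  from tendsto_diff[OF tendsto_const[of "infsum (multiplicative_fun f) {0<..}"] this]
  show ?thesis by (simp add: smooth_def)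
qed

theorem has_sum_multiplicative_fun:
  "(multiplicative_fun f has_sum prodinf (\<lambda>n. if prime n then infsum (f n) UNIV else 1)) {0<..}"
proof -
  define F where "F n = (if prime n then infsum (f n) UNIV else 1)" for n
  have "(\<Prod>n<N. F n) = infsum (multiplicative_fun f) {m. m > 0 \<and> prime_factors m \<subseteq> {p. prime p \<and> p < N}}"
    for N
  proof -
    have "(\<Prod>n<N. F n) = (\<Prod>p\<in>{p. prime p \<and> p < N}. infsum (f p) UNIV)"
      unfolding F_def by (subst prod.inter_filter[symmetric]) (auto intro!: prod.cong)
    also have "\<dots> = infsum (multiplicative_fun f) {m. m > 0 \<and> prime_factors m \<subseteq> {p. prime p \<and> p < N}}"
      by (rule infsumI[symmetric], rule has_sum_multiplicative_fun_smooth) auto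
    finally show ?thesis .
  qed
  then have "(\<lambda>N. \<Prod>n<N. F n) \<longlonglongrightarrow> infsum (multiplicative_fun f) {0<..}"
    using tendsto_infsum_smooth by simp
  moreover have "(\<lambda>N. \<Prod>n<N. F n) \<longlonglongrightarrow> prodinf F"
  proof -
    have "(\<lambda>N. \<Prod>n<Suc N. F n) \<longlonglongrightarrow> prodinf F"
      using convergent_prod_LIMSEQ[OF convergent_prod_local_sums[folded F_def]]
      by (simp add: lessThan_Suc_atMost)
    then show ?thesis by (rule LIMSEQ_imp_Suc)
  qed
  ultimately have "infsum (multiplicative_fun f) {0<..} = prodinf F" by (rule LIMSEQ_unique)
  then show ?thesis
    using has_sum_infsum[OF Infinite_Sum.abs_summable_summable[OF summable_norm_multiplicative_fun]]
    by (simp add: F_def[abs_def])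
qed

end

definition deriv_term :: "(nat \<Rightarrow> nat \<Rightarrow> 'a::comm_monoid_mult) \<Rightarrow> (nat \<Rightarrow> nat \<Rightarrow> 'a) \<Rightarrow> nat \<Rightarrow> nat \<Rightarrow> 'a"
  where "deriv_term f g p m = g p (multiplicity p m) * (\<Prod>q\<in>prime_factors m - {p}. f q (multiplicity q m))"

definition multiplicative_fun_deriv ::
    "(nat \<Rightarrow> nat \<Rightarrow> 'a::comm_semiring_1) \<Rightarrow> (nat \<Rightarrow> nat \<Rightarrow> 'a) \<Rightarrow> nat \<Rightarrow> 'a" where
  "multiplicative_fun_deriv f g m = (\<Sum>p\<in>prime_factors m. deriv_term f g p m)"

context euler_factors
begin

lemma has_sum_multiplicative_fun_coprime:
  assumes p: "prime p"
  shows "(multiplicative_fun f has_sum prodinf (\<lambda>q. if prime q \<and> q \<noteq> p then infsum (f q) UNIV else 1))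
           {m. m > 0 \<and> \<not> p dvd m}"
proof -
  define fp where "fp q k = (if q = p \<and> k > 0 then 0 else f q k)" for q k
  have norm_fp_le: "norm (fp q k) \<le> norm (f q k)" for q k by (simp add: fp_def)
  have summable_fp: "(\<lambda>k. norm (fp q k)) summable_on UNIV" if "prime q" for q
    by (rule summable_on_comparison_test[OF summable_norm_factor[OF that]]) (auto simp: norm_fp_le)
  interpret fp: euler_factors fp \<beta>
  proof
    show "infsum (\<lambda>k. norm (fp q k)) UNIV \<le> 1 + \<beta> q" if "prime q" for q
      using infsum_mono[OF summable_fp[OF that] summable_norm_factor[OF that] norm_fp_le]
        norm_factor_sum_le[OF that] by linarith
  qed (use summable_fp summable_bound bound_nonneg in \<open>auto simp: fp_def\<close>)
  have "(fp p has_sum 1) {0}" by (rule has_sum_finiteI) (auto simp: fp_def)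
  then have "(fp p has_sum 1) UNIV"
    by (subst has_sum_cong_neutral[where T = "{0}"]) (auto simp: fp_def)
  then have "(\<lambda>n. if prime n then infsum (fp n) UNIV else 1)
      = (\<lambda>q. if prime q \<and> q \<noteq> p then infsum (f q) UNIV else 1)"
    using infsumI[of "fp p"] by (auto simp: fun_eq_iff fp_def[abs_def])
  then have "(multiplicative_fun fp has_sum prodinf (\<lambda>q. if prime q \<and> q \<noteq> p then infsum (f q) UNIV else 1))
      {0<..}"
    using fp.has_sum_multiplicative_fun by simp
  moreover have "multiplicative_fun fp m = (if p dvd m then 0 else multiplicative_fun f m)" if "m > 0" for m
  proof (cases "p dvd m")
    case True
    then have "p \<in> prime_factors m" "multiplicity p m > 0"
      using p that by (auto simp: in_prime_factors_iff prime_multiplicity_gt_zero_iff)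
    then show ?thesis unfolding multiplicative_fun_def using True by (auto simp: fp_def intro!: prod_zero)
  next
    case False
    then show ?thesis unfolding multiplicative_fun_def
      by (auto simp: fp_def in_prime_factors_iff intro!: prod.cong)
  qed
  ultimately show ?thesis
    by (subst (asm) has_sum_cong_neutral[where T = "{m. m > 0 \<and> \<not> p dvd m}"]) auto
qed

end

locale euler_factor_derivs = euler_factors f \<beta>
  for f :: "nat \<Rightarrow> nat \<Rightarrow> 'a::{real_normed_field,banach,second_countable_topology}" and \<beta> +
  fixes g :: "nat \<Rightarrow> nat \<Rightarrow> 'a"
  assumes deriv_factor_0 [simp]: "g p 0 = 0"
    and summable_norm_deriv_factor: "prime p \<Longrightarrow> (\<lambda>k. norm (g p k)) summable_on UNIV"
    and norm_deriv_factor_sum_le: "prime p \<Longrightarrow> infsum (\<lambda>k. norm (g p k)) UNIV \<le> \<beta> p"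
begin

text \<open>\<^const>\<open>deriv_term\<close> at \<open>p\<close> lives on the multiples of \<open>p\<close>; writing \<open>m = p\<^sup>k n\<close> with
  \<open>n\<close> coprime to \<open>p\<close> it factors into a local and a coprime part.\<close>

lemma has_sum_deriv_term_multiples:
  assumes p: "prime p"
  shows "(deriv_term f g p has_sum infsum (g p) UNIV * prodinf (\<lambda>q. if prime q \<and> q \<noteq> p then infsum (f q) UNIV else 1))
           {m. m > 0 \<and> p dvd m}"
    and "((\<lambda>m. norm (deriv_term f g p m)) has_sum infsum (\<lambda>k. norm (g p k)) {0<..}
            * infsum (\<lambda>m. norm (multiplicative_fun f m)) {m. m > 0 \<and> \<not> p dvd m}) {m. m > 0 \<and> p dvd m}"
proof -
  define C where "C = {m::nat. m > 0 \<and> \<not> p dvd m}"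
  note bij = bij_betw_prime_power_mult_coprime[OF p]
  have term_eq: "deriv_term f g p (p ^ k * n) = g p k * multiplicative_fun f n" if "k > 0" "n \<in> C" for k n
  proof -
    note pn = prime_power_mult_coprime[OF p that(1), of n]
    have "prime_factors (p ^ k * n) - {p} = prime_factors n"
      using pn(1) that(2) by (auto simp: C_def in_prime_factors_iff)
    then show ?thesis
      using pn that(2) by (auto simp: deriv_term_def C_def multiplicative_fun_def intro!: prod.cong)
  qed
  have norm_C: "(\<lambda>m. norm (multiplicative_fun f m)) summable_on C"
    by (rule summable_on_subset_banach[OF summable_norm_multiplicative_fun]) (auto simp: C_def)
  have norm_g: "(\<lambda>k. norm (g p k)) summable_on {0<..}"
    by (rule summable_on_subset_banach[OF summable_norm_deriv_factor[OF p]]) auto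
  have "(g p has_sum infsum (g p) UNIV) UNIV"
    by (rule has_sum_infsum, rule Infinite_Sum.abs_summable_summable[OF summable_norm_deriv_factor[OF p]])
  then have "(g p has_sum infsum (g p) UNIV) {0<..}"
    by (subst (asm) has_sum_cong_neutral[where T = "{0<..}"]) auto
  then have "((\<lambda>(k,n). g p k * multiplicative_fun f n) has_sum
      infsum (g p) UNIV * prodinf (\<lambda>q. if prime q \<and> q \<noteq> p then infsum (f q) UNIV else 1)) ({0<..} \<times> C)"
    using has_sum_multiplicative_fun_coprime[OF p] norm_g norm_C
    by (intro has_sum_mult_Times) (auto simp: C_def)
  then show "(deriv_term f g p has_sum infsum (g p) UNIV * prodinf (\<lambda>q. if prime q \<and> q \<noteq> p then infsum (f q) UNIV else 1))
      {m. m > 0 \<and> p dvd m}"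
    using has_sum_reindex_bij_betw[OF bij, of "deriv_term f g p"] term_eq
    by (subst (asm) has_sum_cong[where g = "\<lambda>x. deriv_term f g p ((\<lambda>(k,n). p ^ k * n) x)"]) (auto simp: C_def)
  have "((\<lambda>(k,n). norm (g p k) * norm (multiplicative_fun f n)) has_sum
      infsum (\<lambda>k. norm (g p k)) {0<..} * infsum (\<lambda>m. norm (multiplicative_fun f m)) C) ({0<..} \<times> C)"
    using has_sum_infsum[OF norm_g] has_sum_infsum[OF norm_C] norm_g norm_C
    by (intro has_sum_mult_Times) auto
  then show "((\<lambda>m. norm (deriv_term f g p m)) has_sum infsum (\<lambda>k. norm (g p k)) {0<..}
      * infsum (\<lambda>m. norm (multiplicative_fun f m)) {m. m > 0 \<and> \<not> p dvd m}) {m. m > 0 \<and> p dvd m}"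
    using has_sum_reindex_bij_betw[OF bij, of "\<lambda>m. norm (deriv_term f g p m)"] term_eq
    by (subst (asm) has_sum_cong[where g = "\<lambda>x. norm (deriv_term f g p ((\<lambda>(k,n). p ^ k * n) x))"])
       (auto simp: C_def norm_mult)
qed

lemma norm_deriv_term_sum_le:
  assumes p: "prime p"
  shows "infsum (\<lambda>m. norm (deriv_term f g p m)) {m. m > 0 \<and> p dvd m}
           \<le> \<beta> p * infsum (\<lambda>m. norm (multiplicative_fun f m)) {0<..}"
proof -
  note g_summable = summable_norm_deriv_factor[OF p]
  have "infsum (\<lambda>k. norm (g p k)) {0<..} \<le> infsum (\<lambda>k. norm (g p k)) UNIV"
    by (rule infsum_mono2[OF summable_on_subset_banach[OF g_summable] g_summable]) auto
  also have "\<dots> \<le> \<beta> p" by (rule norm_deriv_factor_sum_le[OF p])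
  finally have "infsum (\<lambda>k. norm (g p k)) {0<..} \<le> \<beta> p" .
  moreover have "infsum (\<lambda>m. norm (multiplicative_fun f m)) {m. m > 0 \<and> \<not> p dvd m}
      \<le> infsum (\<lambda>m. norm (multiplicative_fun f m)) {0<..}"
    by (rule infsum_mono2[OF summable_on_subset_banach[OF summable_norm_multiplicative_fun]
          summable_norm_multiplicative_fun]) auto
  ultimately show ?thesis
    unfolding infsumI[OF has_sum_deriv_term_multiples(2)[OF p]]
    by (intro mult_mono) (auto intro: infsum_nonneg bound_nonneg)
qed

end

context euler_factor_derivs
begin

theorem has_sum_multiplicative_fun_deriv:
  obtains X where "(multiplicative_fun_deriv f g has_sum X) {0<..}"
    and "((\<lambda>p. infsum (g p) UNIV * prodinf (\<lambda>q. if prime q \<and> q \<noteq> p then infsum (f q) UNIV else 1))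
           has_sum X) {p. prime p}"
proof -
  define t where "t p m = deriv_term f g p m" for p m
  define M where "M = infsum (\<lambda>m. norm (multiplicative_fun f m)) {0<..}"
  define Q where "Q = Sigma {p::nat. prime p} (\<lambda>p. {m. m > 0 \<and> p dvd m})"
  have norm_t_le: "infsum (\<lambda>m. norm (t p m)) {m. m > 0 \<and> p dvd m} \<le> \<beta> p * M" if "prime p" for p
    unfolding t_def M_def by (rule norm_deriv_term_sum_le[OF that])
  have "\<beta> summable_on UNIV"
    using summable_bound bound_nonneg summable_on_UNIV_nonneg_real_iff by blast
  then have "(\<lambda>p. \<beta> p * M) summable_on {p. prime p}"
    by (intro summable_on_cmult_left, rule summable_on_subset_banach) auto
  then have "(\<lambda>p. infsum (\<lambda>m. norm (t p m)) {m. m > 0 \<and> p dvd m}) summable_on {p. prime p}"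
    by (rule summable_on_comparison_test) (use norm_t_le in \<open>auto intro!: infsum_nonneg\<close>)
  then have "(\<lambda>p. norm (infsum (\<lambda>m. norm (t p m)) {m. m > 0 \<and> p dvd m})) summable_on {p. prime p}"
    by (subst real_norm_def, subst abs_of_nonneg) (auto intro!: infsum_nonneg)
  moreover have "(\<lambda>m. norm (t p m)) summable_on {m. m > 0 \<and> p dvd m}" if "prime p" for p
    using has_sum_deriv_term_multiples(2)[OF that] unfolding t_def by (rule has_sum_imp_summable)
  ultimately have "(\<lambda>x. norm (t (fst x) (snd x))) summable_on Q"
    unfolding Q_def
    using Infinite_Sum.abs_summable_on_Sigma_iff[where f = "\<lambda>x. t (fst x) (snd x)"
        and A = "{p. prime p}" and B = "\<lambda>p. {m. m > 0 \<and> p dvd m}"]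
    by auto
  then have summable: "(\<lambda>x. t (fst x) (snd x)) summable_on Q"
    by (rule Infinite_Sum.abs_summable_summable)
  define X where "X = infsum (\<lambda>x. t (fst x) (snd x)) Q"
  have sum_Q: "((\<lambda>x. t (fst x) (snd x)) has_sum X) Q"
    unfolding X_def by (rule has_sum_infsum[OF summable])
  have "((\<lambda>p. infsum (g p) UNIV * prodinf (\<lambda>q. if prime q \<and> q \<noteq> p then infsum (f q) UNIV else 1))
      has_sum X) {p. prime p}"
    by (rule has_sum_SigmaD[OF sum_Q[unfolded Q_def]])
       (use has_sum_deriv_term_multiples(1) in \<open>auto simp: t_def\<close>)
  moreover have swap: "bij_betw (\<lambda>(m,p). (p,m)) (Sigma {0<..} prime_factors) Q"
    unfolding Q_def by (rule bij_betwI[where g = "\<lambda>(p,m). (m,p)"]) (auto simp: in_prime_factors_iff)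
  then have "((\<lambda>x. t (snd x) (fst x)) has_sum X) (Sigma {0<..} prime_factors)"
    using has_sum_reindex_bij_betw[OF swap, of "\<lambda>x. t (fst x) (snd x)"] sum_Q
    by (simp add: case_prod_unfold)
  then have "(multiplicative_fun_deriv f g has_sum X) {0<..}"
    unfolding multiplicative_fun_deriv_def t_def[symmetric]
    by (rule has_sum_SigmaD) (auto simp: case_prod_unfold)
  ultimately show ?thesis using that by blast
qed

end

section \<open>The negative binomial series\<close>

definition neg_binom_coeff :: "'a::field_char_0 \<Rightarrow> nat \<Rightarrow> 'a" where
  "neg_binom_coeff x k = pochhammer x k / fact k"

lemma gbinomial_uminus_mult_power:
  fixes x y :: "'a::field_char_0"
  shows "((-x) gchoose k) * (-y) ^ k = neg_binom_coeff x k * y ^ k"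
proof -
  have "((-x) gchoose k) * (-y) ^ k = ((-1)^k * (-1)^k) * (neg_binom_coeff x k * y ^ k)"
    by (simp add: gbinomial_pochhammer neg_binom_coeff_def power_minus[of y] mult_ac)
  then show ?thesis by (simp flip: power_mult_distrib)
qed

lemma pochhammer_nonneg_real: "x \<ge> 0 \<Longrightarrow> pochhammer (x::real) k \<ge> 0"
  by (induction k) (auto simp: pochhammer_Suc)

lemma neg_binom_coeff_nonneg: "r \<ge> 0 \<Longrightarrow> neg_binom_coeff (r::real) k \<ge> 0"
  by (simp add: neg_binom_coeff_def pochhammer_nonneg_real)

lemma norm_neg_binom_coeff_le: "norm (neg_binom_coeff (z::complex) k) \<le> neg_binom_coeff (norm z) k"
proof -
  have "norm (pochhammer z k) \<le> pochhammer (norm z) k"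
  proof (induction k)
    case (Suc k)
    have "norm (pochhammer z (Suc k)) = norm (pochhammer z k) * norm (z + of_nat k)"
      by (simp add: pochhammer_Suc norm_mult)
    also have "\<dots> \<le> pochhammer (norm z) k * (norm z + of_nat k)"
      using norm_triangle_ineq[of z "of_nat k"]
      by (intro mult_mono Suc.IH) (auto simp: pochhammer_nonneg_real)
    finally show ?case by (simp add: pochhammer_Suc)
  qed simp
  then show ?thesis by (simp add: neg_binom_coeff_def norm_divide divide_right_mono)
qed

lemma has_sum_neg_binomial_real:
  fixes r y :: real
  assumes "r \<ge> 0" "0 \<le> y" "y < 1"
  shows "((\<lambda>k. neg_binom_coeff r k * y ^ k) has_sum (1 - y) powr (-r)) UNIV"
proof -
  have "(\<lambda>k. ((-r) gchoose k) * (-y) ^ k) sums (1 + (-y)) powr (-r)"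
    by (rule gen_binomial_real) (use assms in auto)
  then have "(\<lambda>k. neg_binom_coeff r k * y ^ k) sums (1 - y) powr (-r)"
    by (simp add: gbinomial_uminus_mult_power)
  then show ?thesis
    by (rule sums_nonneg_imp_has_sum) (use assms in \<open>auto intro!: mult_nonneg_nonneg neg_binom_coeff_nonneg\<close>)
qed

lemma has_sum_neg_binomial_complex:
  fixes y :: real and z :: complex
  assumes "\<bar>y\<bar> < 1"
  shows "((\<lambda>k. neg_binom_coeff z k * of_real y ^ k) has_sum of_real (1 - y) powr (-z)) UNIV"
proof -
  have majorant: "summable (\<lambda>k. neg_binom_coeff (norm z) k * \<bar>y\<bar> ^ k)"
    using has_sum_imp_sums[OF has_sum_neg_binomial_real[of "norm z" "\<bar>y\<bar>"]] assms
    by (auto simp: sums_iff)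
  have bound: "norm (neg_binom_coeff z k * of_real y ^ k) \<le> neg_binom_coeff (norm z) k * \<bar>y\<bar> ^ k"
    for k
    unfolding norm_mult norm_power norm_of_real by (intro mult_right_mono norm_neg_binom_coeff_le) auto
  have "summable (\<lambda>k. norm (neg_binom_coeff z k * of_real y ^ k))"
    by (rule summable_comparison_test'[OF majorant]) (simp add: bound)
  moreover have "(\<lambda>k. ((-z) gchoose k) * (- of_real y) ^ k) sums (1 + (- of_real y)) powr (-z)"
    by (rule gen_binomial_complex) (use assms in simp)
  then have "(\<lambda>k. neg_binom_coeff z k * of_real y ^ k) sums of_real (1 - y) powr (-z)"
    by (simp add: gbinomial_uminus_mult_power)
  ultimately show ?thesis by (rule norm_summable_imp_has_sum)
qed

section \<open>Local factors at a prime\<close>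

definition local_term :: "complex \<Rightarrow> nat \<Rightarrow> real \<Rightarrow> real \<Rightarrow> complex \<Rightarrow> nat \<Rightarrow> complex" where
  "local_term z p a b c k =
     (if k = 0 then c else neg_binom_coeff z k / of_nat p ^ k * of_real (a + b * (-1) ^ k))"

definition local_bound :: "complex \<Rightarrow> nat \<Rightarrow> real" where
  "local_bound z p = (2 * norm z + 4 * 2 powr norm z) / real p ^ 2"

lemma has_sum_single:
  fixes c :: "'a::{comm_monoid_add,t2_space}"
  shows "((\<lambda>k. if k = j then c else 0) has_sum c) UNIV"
proof -
  have "((\<lambda>k. if k = j then c else 0) has_sum c) {j}" by (rule has_sum_finiteI) auto
  then show ?thesis by (subst (asm) has_sum_cong_neutral[where T = UNIV]) auto
qed

lemma has_sum_local_term: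
  assumes "p \<ge> 2"
  shows "(local_term z p a b c has_sum (of_real a * of_real (1 - 1 / real p) powr (-z)
            + of_real b * of_real (1 + 1 / real p) powr (-z) + (c - of_real a - of_real b))) UNIV"
proof -
  define x where "x = 1 / real p"
  have x: "\<bar>x\<bar> < 1" "\<bar>-x\<bar> < 1" using assms by (auto simp: x_def)
  have "((\<lambda>k. of_real a * (neg_binom_coeff z k * of_real x ^ k)
        + of_real b * (neg_binom_coeff z k * of_real (-x) ^ k)
        + (if k = 0 then c - of_real a - of_real b else 0))
      has_sum (of_real a * of_real (1 - x) powr (-z) + of_real b * of_real (1 - (-x)) powr (-z)
        + (c - of_real a - of_real b))) UNIV"
    by (intro has_sum_add has_sum_cmult_right has_sum_neg_binomial_complex x has_sum_single)
  moreover have "of_real a * (neg_binom_coeff z k * of_real x ^ k)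
      + of_real b * (neg_binom_coeff z k * of_real (-x) ^ k)
      + (if k = 0 then c - of_real a - of_real b else 0) = local_term z p a b c k" for k
  proof (cases "k = 0")
    case True then show ?thesis by (simp add: local_term_def neg_binom_coeff_def)
  next
    case False
    have "(of_real (-x) :: complex) ^ k = of_real ((-1) ^ k) * of_real x ^ k"
      by (simp add: power_minus[of "complex_of_real x"])
    then show ?thesis
      using False by (simp add: local_term_def x_def power_divide algebra_simps)
  qed
  ultimately show ?thesis unfolding x_def by simp
qed

lemma norm_local_term_le:
  assumes "k \<ge> 1" "\<bar>a + b * (-1) ^ k\<bar> \<le> M"
  shows "norm (local_term z p a b c k) \<le> M * (neg_binom_coeff (norm z) k / real p ^ k)"
proof -
  have "local_term z p a b c k = neg_binom_coeff z k / of_nat p ^ k * of_real (a + b * (-1) ^ k)"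
    using assms(1) by (simp add: local_term_def)
  then have "norm (local_term z p a b c k) = norm (neg_binom_coeff z k) / real p ^ k * \<bar>a + b * (-1) ^ k\<bar>"
    by (simp only: norm_mult norm_divide norm_power norm_of_real norm_of_nat)
  also have "\<dots> \<le> neg_binom_coeff (norm z) k / real p ^ k * M"
    using assms(2) by (intro mult_mono divide_right_mono norm_neg_binom_coeff_le)
      (auto intro!: divide_nonneg_nonneg neg_binom_coeff_nonneg)
  finally show ?thesis by (simp add: mult_ac)
qed

lemma summable_norm_local_term:
  assumes "p \<ge> 2"
  shows "(\<lambda>k. norm (local_term z p a b c k)) summable_on UNIV"
proof -
  have "(\<lambda>k. neg_binom_coeff (norm z) k * (1 / real p) ^ k) summable_on UNIV"
    using has_sum_neg_binomial_real[of "norm z" "1 / real p"] assms by (auto dest: has_sum_imp_summable)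
  then have "(\<lambda>k. (if k = 0 then norm c else 0)
      + (\<bar>a\<bar> + \<bar>b\<bar>) * (neg_binom_coeff (norm z) k / real p ^ k)) summable_on UNIV"
    by (intro summable_on_add summable_on_cmult_right has_sum_imp_summable[OF has_sum_single])
       (simp add: power_divide)
  moreover have "norm (local_term z p a b c k)
      \<le> (if k = 0 then norm c else 0) + (\<bar>a\<bar> + \<bar>b\<bar>) * (neg_binom_coeff (norm z) k / real p ^ k)" for k
  proof (cases "k = 0")
    case False
    have "\<bar>a + b * (-1) ^ k\<bar> \<le> \<bar>a\<bar> + \<bar>b\<bar>"
      by (rule order.trans[OF abs_triangle_ineq]) (auto simp: abs_mult)
    then show ?thesis using False norm_local_term_le[of k a b _ z p c] by simp
  qed (simp add: local_term_def neg_binom_coeff_def)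
  ultimately show ?thesis by (rule summable_on_comparison_test) auto
qed

lemma norm_local_term_le_tail:
  assumes p: "p \<ge> 2" and k: "k \<ge> 2" and ab: "\<bar>a\<bar> + \<bar>b\<bar> \<le> 1"
  shows "norm (local_term z p a b c k) \<le> 4 / real p ^ 2 * (neg_binom_coeff (norm z) k * (1/2) ^ k)"
proof -
  have "\<bar>a + b * (-1) ^ k\<bar> \<le> 1"
    by (rule order.trans[OF abs_triangle_ineq]) (use ab in \<open>auto simp: abs_mult\<close>)
  then have "norm (local_term z p a b c k) \<le> neg_binom_coeff (norm z) k / real p ^ k"
    using norm_local_term_le[of k a b 1 z p c] k by simp
  also have "\<dots> = neg_binom_coeff (norm z) k * ((1 / real p) ^ 2 * (1 / real p) ^ (k - 2))"
  proof -
    have "k = 2 + (k - 2)" using k by simp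
    then have "real p ^ k = real p ^ 2 * real p ^ (k - 2)" by (metis power_add)
    then show ?thesis by (simp add: power_one_over)
  qed
  also have "\<dots> \<le> neg_binom_coeff (norm z) k * ((1 / real p) ^ 2 * (1/2) ^ (k - 2))"
    using p by (intro mult_left_mono power_mono neg_binom_coeff_nonneg) (auto simp: field_simps)
  also have "\<dots> = 4 / real p ^ 2 * (neg_binom_coeff (norm z) k * (1/2) ^ k)"
    using k by (simp add: power_diff field_simps)
  finally show ?thesis .
qed

text \<open>Beyond the constant term, the \<open>k = 1\<close> term is \<open>O(|a - b|/p)\<close> and the tail is dominated
  by the binomial series at \<open>1/2\<close>, scaled by \<open>4/p\<^sup>2\<close>.\<close>

lemma norm_local_term_sum_le:
  assumes p: "p \<ge> 2" and ab: "\<bar>a - b\<bar> \<le> 2 / real p" "\<bar>a\<bar> + \<bar>b\<bar> \<le> 1"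
  shows "infsum (\<lambda>k. norm (local_term z p a b c k)) UNIV \<le> norm c + local_bound z p"
proof -
  define r where "r = norm z"
  have r: "r \<ge> 0" by (simp add: r_def)
  define h where "h k = (if k = 0 then norm c else 0) + ((if k = 1 then 2 * r / real p ^ 2 else 0)
                    + 4 / real p ^ 2 * (neg_binom_coeff r k * (1/2) ^ k))" for k :: nat
  have "((\<lambda>k. neg_binom_coeff r k * (1/2) ^ k) has_sum 2 powr r) UNIV"
    using has_sum_neg_binomial_real[of r "1/2"] r by (simp add: powr_minus_divide powr_divide)
  then have h: "(h has_sum (norm c + (2 * r / real p ^ 2 + 4 / real p ^ 2 * 2 powr r))) UNIV"
    unfolding h_def by (intro has_sum_add has_sum_cmult_right has_sum_single)
  have "norm (local_term z p a b c k) \<le> h k" for k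
  proof -
    consider "k = 0" | "k = 1" | "k \<ge> 2" by linarith
    then show ?thesis
    proof cases
      case 1
      then show ?thesis using neg_binom_coeff_nonneg[OF r, of 0] by (simp add: h_def local_term_def)
    next
      case 2
      have "\<bar>a + b * (-1) ^ k\<bar> \<le> 2 / real p" using 2 ab(1) by simp
      then have "norm (local_term z p a b c k) \<le> 2 / real p * (neg_binom_coeff r k / real p ^ k)"
        using norm_local_term_le[of k a b "2 / real p" z p c] 2 by (simp add: r_def)
      also have "\<dots> = 2 * r / real p ^ 2"
        using 2 by (simp add: neg_binom_coeff_def power2_eq_square)
      moreover have "0 \<le> 4 / real p ^ 2 * (neg_binom_coeff r k * (1/2) ^ k)"
        using neg_binom_coeff_nonneg[OF r, of k] by simp
      ultimately show ?thesis using 2 by (simp add: h_def)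
    next
      case 3
      then have "norm (local_term z p a b c k) \<le> 4 / real p ^ 2 * (neg_binom_coeff r k * (1/2) ^ k)"
        using norm_local_term_le_tail[OF p _ ab(2)] by (simp add: r_def)
      then show ?thesis using 3 by (simp add: h_def)
    qed
  qed
  then have "infsum (\<lambda>k. norm (local_term z p a b c k)) UNIV \<le> infsum h UNIV"
    by (intro infsum_mono summable_norm_local_term p has_sum_imp_summable[OF h])
  also have "\<dots> = norm c + local_bound z p"
    using infsumI[OF h] by (simp add: local_bound_def r_def add_divide_distrib)
  finally show ?thesis .
qed

lemma summable_local_bound: "summable (local_bound z)"
proof -
  have "summable (\<lambda>n. inverse (real n ^ 2))" by (rule inverse_power_summable) simp
  then show ?thesis unfolding local_bound_def divide_inverse by (rule summable_mult)
qed

lemma local_bound_nonneg: "local_bound z p \<ge> 0"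
  by (simp add: local_bound_def)

(* P(X(p) = 1) and P(X(p) = -1) *)
definition prob_plus :: "nat \<Rightarrow> real" where
  "prob_plus p = (real p - 1)^2 / (2 * real p * (real p + 1))"

definition prob_minus :: "nat \<Rightarrow> real" where
  "prob_minus p = (real p - 1) / (2 * real p)"

(* The local factor hm_local p k of h_m has derivative deriv_plus p + deriv_minus p * (-1)^k at s = 1. *)
definition deriv_plus :: "nat \<Rightarrow> real" where
  "deriv_plus p = (if p = 2 then -(13/72) * ln 2 else -(2 * ln (real p) / (real p + 1)^2))"

definition deriv_minus :: "nat \<Rightarrow> real" where
  "deriv_minus p = (if p = 2 then ln 2 / 8 else 0)"

definition euler_factor :: "complex \<Rightarrow> nat \<Rightarrow> nat \<Rightarrow> complex" where
  "euler_factor z p = local_term z p (prob_plus p) (prob_minus p) 1"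

definition euler_factor_deriv :: "complex \<Rightarrow> nat \<Rightarrow> nat \<Rightarrow> complex" where
  "euler_factor_deriv z p = local_term z p (deriv_plus p) (deriv_minus p) 0"

lemma prob_plus_add_prob_minus:
  assumes "p > 0"
  shows "prob_plus p + prob_minus p = (real p - 1) / (real p + 1)"
proof -
  have "real p > 0" "real p + 1 > 0" using assms by auto
  then show ?thesis
    unfolding prob_plus_def prob_minus_def
    by (simp add: divide_simps power2_eq_square) (simp add: algebra_simps)
qed

lemma prob_plus_diff_prob_minus:
  assumes "p > 0"
  shows "prob_plus p - prob_minus p = -((real p - 1) / (real p * (real p + 1)))"
proof -
  have "real p > 0" "real p + 1 > 0" using assms by auto
  then show ?thesis
    unfolding prob_plus_def prob_minus_def
    by (simp add: divide_simps power2_eq_square) (simp add: algebra_simps)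
qed

lemma one_minus_prob_plus_minus: "p > 0 \<Longrightarrow> 1 - prob_plus p - prob_minus p = 2 / (real p + 1)"
  using prob_plus_add_prob_minus[of p] by (simp add: field_simps)

lemma prob_plus_minus_bounds:
  assumes "p \<ge> 2"
  shows "\<bar>prob_plus p - prob_minus p\<bar> \<le> 2 / real p" "\<bar>prob_plus p\<bar> + \<bar>prob_minus p\<bar> \<le> 1"
proof -
  have p: "real p \<ge> 2" using assms by simp
  have "(real p - 1) / (real p * (real p + 1)) \<le> 2 * (real p + 1) / (real p * (real p + 1))"
    using p by (intro divide_right_mono) auto
  also have "\<dots> = 2 / real p"
    by (rule nonzero_mult_divide_mult_cancel_right) (use p in linarith)
  finally show "\<bar>prob_plus p - prob_minus p\<bar> \<le> 2 / real p"
    using p by (simp add: prob_plus_diff_prob_minus)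
  have "prob_plus p \<ge> 0" "prob_minus p \<ge> 0" using p by (auto simp: prob_plus_def prob_minus_def)
  then show "\<bar>prob_plus p\<bar> + \<bar>prob_minus p\<bar> \<le> 1"
    using p by (simp add: prob_plus_add_prob_minus)
qed

lemma deriv_plus_minus_bounds:
  assumes "p \<ge> 2"
  shows "\<bar>deriv_plus p - deriv_minus p\<bar> \<le> 2 / real p" "\<bar>deriv_plus p\<bar> + \<bar>deriv_minus p\<bar> \<le> 1"
proof -
  have "\<bar>deriv_plus p\<bar> + \<bar>deriv_minus p\<bar> \<le> 2 / real p \<and> 2 / real p \<le> 1"
  proof (cases "p = 2")
    case True
    then show ?thesis using ln_2_less_1 by (simp add: deriv_plus_def deriv_minus_def)
  next
    case False
    have p: "real p \<ge> 2" using assms by simp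
    have "2 * ln (real p) / (real p + 1)^2 \<le> 2 * real p / (real p * real p)"
      using p ln_bound[of "real p"] by (intro frac_le) (auto simp: power2_eq_square algebra_simps)
    then show ?thesis using False p by (simp add: deriv_plus_def deriv_minus_def)
  qed
  then show "\<bar>deriv_plus p - deriv_minus p\<bar> \<le> 2 / real p" "\<bar>deriv_plus p\<bar> + \<bar>deriv_minus p\<bar> \<le> 1"
    by auto
qed

lemma has_sum_euler_factor:
  assumes p: "p \<ge> 2"
  shows "(euler_factor z p has_sum EXp p z) UNIV"
proof -
  have "(euler_factor z p has_sum (of_real (prob_plus p) * of_real (1 - 1 / real p) powr (-z)
      + of_real (prob_minus p) * of_real (1 + 1 / real p) powr (-z)
      + (1 - of_real (prob_plus p) - of_real (prob_minus p)))) UNIV"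
    unfolding euler_factor_def by (rule has_sum_local_term[OF p])
  moreover have "(1 - of_real (prob_plus p) - of_real (prob_minus p) :: complex) = of_real (2 / (real p + 1))"
    using one_minus_prob_plus_minus[of p] p by (metis of_real_1 of_real_diff not_numeral_le_zero gr0I)
  ultimately show ?thesis unfolding EXp_def prob_plus_def prob_minus_def by simp
qed

lemma has_sum_euler_factor_deriv_odd:
  assumes p: "p \<ge> 3"
  shows "(euler_factor_deriv z p has_sum aphi p z) UNIV"
proof -
  have "(euler_factor_deriv z p has_sum (of_real (deriv_plus p) * of_real (1 - 1 / real p) powr (-z)
      + of_real (deriv_minus p) * of_real (1 + 1 / real p) powr (-z)
      + (0 - of_real (deriv_plus p) - of_real (deriv_minus p)))) UNIV"
    unfolding euler_factor_deriv_def by (rule has_sum_local_term) (use p in simp)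
  moreover have "of_real (deriv_plus p) * X + of_real (deriv_minus p) * Y
      + (0 - of_real (deriv_plus p) - of_real (deriv_minus p)) = of_real (- deriv_plus p) * (1 - X)"
    for X Y :: complex
    using p by (simp add: deriv_minus_def algebra_simps)
  moreover have "- deriv_plus p = 2 * ln (real p) / (real p + 1)^2" using p by (simp add: deriv_plus_def)
  ultimately show ?thesis unfolding aphi_def by simp
qed

lemma has_sum_euler_factor_deriv_2:
  "(euler_factor_deriv z 2 has_sum
      of_real (deriv_plus 2) * (of_real (1 - 1 / real 2) powr (-z) - 1)
      + of_real (deriv_minus 2) * (of_real (1 + 1 / real 2) powr (-z) - 1)) UNIV"
  using has_sum_local_term[of 2 z "deriv_plus 2" "deriv_minus 2" 0]
  by (simp add: euler_factor_deriv_def algebra_simps)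

lemma euler_factor_derivs_EXp: "euler_factor_derivs (euler_factor z) (local_bound z) (euler_factor_deriv z)"
proof unfold_locales
  fix p :: nat assume "prime p"
  then have p: "p \<ge> 2" by (rule prime_ge_2_nat)
  show "(\<lambda>k. norm (euler_factor z p k)) summable_on UNIV"
    "(\<lambda>k. norm (euler_factor_deriv z p k)) summable_on UNIV"
    unfolding euler_factor_def euler_factor_deriv_def using p by (auto intro: summable_norm_local_term)
  show "infsum (\<lambda>k. norm (euler_factor z p k)) UNIV \<le> 1 + local_bound z p"
    using norm_local_term_sum_le[OF p prob_plus_minus_bounds[OF p], of z 1] by (simp add: euler_factor_def)
  show "infsum (\<lambda>k. norm (euler_factor_deriv z p k)) UNIV \<le> local_bound z p"
    using norm_local_term_sum_le[OF p deriv_plus_minus_bounds[OF p], of z 0]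
    by (simp add: euler_factor_deriv_def)
qed (auto simp: euler_factor_def euler_factor_deriv_def local_term_def summable_local_bound local_bound_nonneg)

section \<open>The zeta function near 2\<close>

lemma has_field_derivative_powr_right_comp:
  fixes w :: complex
  assumes "w \<noteq> 0" "(g has_field_derivative g') (at x within S)" "D = Ln w * w powr g x * g'"
  shows "((\<lambda>s. w powr g s) has_field_derivative D) (at x within S)"
  using DERIV_chain2[OF has_field_derivative_powr_right[OF assms(1)] assms(2)] assms(3) by simp

lemma zeta_has_field_derivative_2: "(zeta has_field_derivative deriv zeta 2) (at 2)"
proof -
  define S where "S = ball (2::complex) (1/2)"
  define f where "f n s = of_nat (Suc n) powr (-s)" for n :: nat and s :: complex
  define f' where "f' n s = Ln (of_nat (Suc n)) * of_nat (Suc n) powr (-s) * (-1)" for n :: nat and s :: complex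
  have deriv: "(f n has_field_derivative f' n s) (at s)" for n s
  proof -
    have "(of_nat (Suc n) :: complex) \<noteq> 0" by (simp del: of_nat_Suc)
    moreover have "((\<lambda>s. -s) has_field_derivative -1) (at s)" by (auto intro!: derivative_eq_intros)
    ultimately show ?thesis
      unfolding f_def f'_def by (rule has_field_derivative_powr_right_comp) simp
  qed
  have majorant: "summable (\<lambda>n. real (Suc n) powr (-3/2))"
    using summable_real_powr_iff[of "-3/2"] summable_Suc_iff[of "\<lambda>n. real n powr (-3/2)"] by simp
  have bound: "\<forall>\<^sub>F n in sequentially. \<forall>s\<in>S. norm (f n s) \<le> real (Suc n) powr (-3/2)"
  proof (intro always_eventually allI ballI)
    fix n s assume s: "s \<in> S"
    have "\<bar>Re s - 2\<bar> \<le> cmod (s - 2)" using abs_Re_le_cmod[of "s - 2"] by simp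
    also have "\<dots> < 1/2" using s by (simp add: S_def dist_norm norm_minus_commute)
    finally have "Re s \<ge> 3/2" by linarith
    have "norm (f n s) = real (Suc n) powr Re (-s)"
      unfolding f_def by (subst norm_powr_real_powr) auto
    also have "\<dots> \<le> real (Suc n) powr (-3/2)"
      by (intro powr_mono) (use \<open>Re s \<ge> 3/2\<close> in auto)
    finally show "norm (f n s) \<le> real (Suc n) powr (-3/2)" .
  qed
  obtain g g' where g: "\<forall>s\<in>S. ((\<lambda>n. f n s) sums g s) \<and> ((\<lambda>n. f' n s) sums g' s)
      \<and> (g has_field_derivative g' s) (at s)"
    using series_and_derivative_comparison[OF _ majorant deriv bound] unfolding S_def by auto
  have "zeta s = (\<Sum>n. f n s)" for s
    unfolding zeta_def f_def by (simp add: powr_minus_divide)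
  then have "\<forall>s\<in>S. g s = zeta s"
    using g by (auto simp: sums_iff)
  moreover have "2 \<in> S" by (simp add: S_def)
  moreover have "(g has_field_derivative g' 2) (at 2)" using g \<open>2 \<in> S\<close> by blast
  ultimately have "(zeta has_field_derivative g' 2) (at 2)"
    using has_field_derivative_transform_within_open[of g "g' 2" 2 S zeta] by (simp add: S_def)
  then show ?thesis using DERIV_imp_deriv by metis
qed

lemma zeta_2_nonzero: "zeta 2 \<noteq> 0"
proof -
  have summand: "1 / of_nat (Suc n) powr (2::complex) = of_real (1 / real (Suc n) powr 2)" for n
    using powr_of_real[of "real (Suc n)" 2] by simp
  have summable: "summable (\<lambda>n. 1 / real (Suc n) powr 2)"
    using summable_real_powr_iff[of "-2"] summable_Suc_iff[of "\<lambda>n. real n powr (-2)"]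
    by (simp add: powr_minus_divide)
  have "zeta 2 = of_real (\<Sum>n. 1 / real (Suc n) powr 2)"
    unfolding zeta_def summand by (rule suminf_of_real[OF summable, symmetric])
  moreover have "(\<Sum>n. 1 / real (Suc n) powr 2) > 0"
    by (rule suminf_pos[OF summable]) simp
  ultimately show ?thesis by simp
qed

section \<open>The local factors of h_m\<close>

definition kappa_2adic :: "nat \<Rightarrow> complex \<Rightarrow> complex" where
  "kappa_2adic k s = (-1) ^ k / 2 * ((8 powr s + 4 powr s) / (8 powr s + 2 powr s + 2))
       * (1 + 2 * (1 + (-1) ^ k) / (4 powr s * (2 powr s - 1)))"

definition even_exp_factor :: "nat \<Rightarrow> complex \<Rightarrow> complex" where
  "even_exp_factor p s = (1 - 2 / of_nat p) * (1 + 2 * (of_nat p - 1) / ((of_nat p - 2) * (of_nat p powr s - 1)))"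

definition hm_numer :: "nat \<Rightarrow> nat \<Rightarrow> complex \<Rightarrow> complex" where
  "hm_numer p k s = (if p = 2 then kappa_2adic k s else if odd k then -1 / of_nat p else even_exp_factor p s)"

definition hm_denom :: "nat \<Rightarrow> complex \<Rightarrow> complex" where
  "hm_denom p s = 1 + 2 / (of_nat p powr s - 1)"

definition hm_local :: "nat \<Rightarrow> nat \<Rightarrow> complex \<Rightarrow> complex" where
  "hm_local p k s = hm_numer p k s / hm_denom p s"

lemma prime_factors_prod_primes:
  assumes "finite A" "\<And>p. p \<in> A \<Longrightarrow> prime (p::nat)"
  shows "prime_factors (\<Prod>A) = A"
proof -
  have "prime_factors (prod id A) = \<Union>((prime_factors \<circ> id) ` A)"
    by (rule prime_factors_prod) (use assms in \<open>auto dest: prime_gt_0_nat\<close>)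
  also have "\<dots> = A" using assms by (auto simp: prime_factorization_prime)
  finally show ?thesis by simp
qed

lemma prod_odd_exp_primes:
  "(\<Prod>p\<in>odd_exp_primes m. -1 / of_nat p :: complex)
     = (-1) ^ card (prime_factors (m0 m)) / of_nat (m0 m)"
proof -
  have "prime_factors (m0 m) = odd_exp_primes m"
    unfolding m0_def by (rule prime_factors_prod_primes) (auto simp: odd_exp_primes_def)
  moreover have "(\<Prod>p\<in>odd_exp_primes m. -1 / of_nat p :: complex)
      = (\<Prod>p\<in>odd_exp_primes m. -1) / (\<Prod>p\<in>odd_exp_primes m. of_nat p)"
    by (rule prod_dividef)
  ultimately show ?thesis by (simp add: m0_def)
qed

lemma hm_eq_prod_hm_local:
  assumes m: "m > 0"
  shows "hm m s = (\<Prod>p\<in>prime_factors m. hm_local p (multiplicity p m) s)"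
proof -
  define P where "P = prime_factors m"
  define Od where "Od = odd_exp_primes m"
  define Ev where "Ev = even_exp_primes m"
  define Tw where "Tw = P \<inter> {2}"
  have fin: "finite Tw" "finite Od" "finite Ev"
    by (auto simp: P_def Od_def Ev_def Tw_def odd_exp_primes_def even_exp_primes_def)
  have P_split: "P = Tw \<union> (Od \<union> Ev)" "Tw \<inter> (Od \<union> Ev) = {}" "Od \<inter> Ev = {}"
    by (auto simp: P_def Od_def Ev_def Tw_def odd_exp_primes_def even_exp_primes_def)
  have "(\<Prod>p\<in>P. hm_numer p (multiplicity p m) s) =
      (\<Prod>p\<in>Tw. hm_numer p (multiplicity p m) s) * ((\<Prod>p\<in>Od. hm_numer p (multiplicity p m) s)
        * (\<Prod>p\<in>Ev. hm_numer p (multiplicity p m) s))"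
    unfolding P_split(1) using fin P_split(2,3) by (simp add: prod.union_disjoint)
  also have "(\<Prod>p\<in>Tw. hm_numer p (multiplicity p m) s) = kappa m s"
  proof (cases "odd m")
    case True
    then have "Tw = {}" unfolding Tw_def P_def by (auto simp: in_prime_factors_iff)
    then show ?thesis using True by (simp add: kappa_def)
  next
    case False
    then have "Tw = {2}" unfolding Tw_def P_def using m by (auto simp: in_prime_factors_iff)
    then show ?thesis using False by (simp add: kappa_def hm_numer_def kappa_2adic_def e1_def)
  qed
  also have "(\<Prod>p\<in>Od. hm_numer p (multiplicity p m) s) = (\<Prod>p\<in>Od. -1 / of_nat p)"
    by (rule prod.cong) (auto simp: Od_def odd_exp_primes_def hm_numer_def)
  also have "\<dots> = (-1) ^ card (prime_factors (m0 m)) / of_nat (m0 m)"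
    unfolding Od_def by (rule prod_odd_exp_primes)
  also have "(\<Prod>p\<in>Ev. hm_numer p (multiplicity p m) s) = (\<Prod>p\<in>Ev. even_exp_factor p s)"
    by (rule prod.cong) (auto simp: Ev_def even_exp_primes_def hm_numer_def)
  finally have "(\<Prod>p\<in>P. hm_local p (multiplicity p m) s) = kappa m s
      * ((-1) ^ card (prime_factors (m0 m)) / of_nat (m0 m) * (\<Prod>p\<in>Ev. even_exp_factor p s))
      / (\<Prod>p\<in>P. hm_denom p s)"
    unfolding hm_local_def by (simp add: prod_dividef)
  moreover have "hm m s = (-1) ^ card (prime_factors (m0 m)) / of_nat (m0 m)
      * ((\<Prod>p\<in>Ev. even_exp_factor p s) / (\<Prod>p\<in>P. hm_denom p s)) * kappa m s"
    unfolding hm_def even_exp_factor_def hm_denom_def Ev_def P_def by simp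
  ultimately show ?thesis unfolding P_def by (simp add: field_simps)
qed

lemma Ln_2_complex: "Ln (2::complex) = of_real (ln 2)"
  using Ln_of_real[of 2] by simp

lemma Ln_4_complex: "Ln (4::complex) = 2 * of_real (ln 2)"
proof -
  have "Ln (4::complex) = of_real (ln (2 ^ 2))" using Ln_of_real[of 4] by simp
  then show ?thesis by (subst (asm) ln_realpow) auto
qed

lemma Ln_8_complex: "Ln (8::complex) = 3 * of_real (ln 2)"
proof -
  have "Ln (8::complex) = of_real (ln (2 ^ 3))" using Ln_of_real[of 8] by simp
  then show ?thesis by (subst (asm) ln_realpow) auto
qed

lemmas Ln_powers_of_2 = Ln_2_complex Ln_4_complex Ln_8_complex

definition two_adic_factor :: "complex \<Rightarrow> complex" where
  "two_adic_factor s = (8 powr s + 2 powr s + 2) / (8 powr s + 4 powr s)"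

lemma two_adic_factor_1: "two_adic_factor 1 = 1"
  by (simp add: two_adic_factor_def)

lemma two_adic_factor_has_deriv_at_1:
  "(two_adic_factor has_field_derivative -(of_real (ln 2) / 2)) (at 1)"
  unfolding two_adic_factor_def
  by (auto intro!: derivative_eq_intros has_field_derivative_powr_right_comp simp: Ln_powers_of_2)

lemma odd_prime_of_nat_ne:
  assumes "prime p" "p \<noteq> 2"
  shows "(of_nat p :: complex) \<noteq> 0" "(of_nat p :: complex) - 1 \<noteq> 0" "(of_nat p :: complex) - 2 \<noteq> 0"
        "(of_nat p :: complex) + 1 \<noteq> 0"
proof -
  have "p \<ge> 3" using prime_ge_2_nat[OF assms(1)] assms(2) by simp
  then have ne: "(of_nat p :: complex) \<noteq> of_nat k" if "k < 3" for k
    using that by (simp only: of_nat_eq_iff)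
  show "(of_nat p :: complex) \<noteq> 0" "(of_nat p :: complex) - 1 \<noteq> 0" "(of_nat p :: complex) - 2 \<noteq> 0"
    using ne[of 0] ne[of 1] ne[of 2] by simp_all
  show "(of_nat p :: complex) + 1 \<noteq> 0"
    by (metis of_nat_Suc of_nat_eq_0_iff Suc_neq_Zero add.commute)
qed

lemma hm_denom_has_deriv_at_1:
  assumes "p \<ge> 2"
  shows "(hm_denom p has_field_derivative -(2 * (of_nat p * Ln (of_nat p))) / (of_nat p - 1)^2) (at 1)"
proof -
  have "(of_nat p :: complex) \<noteq> 0" "(of_nat p :: complex) - 1 \<noteq> 0" using assms by auto
  then show ?thesis unfolding hm_denom_def
    by (auto intro!: derivative_eq_intros has_field_derivative_powr_right_comp simp: power2_eq_square)
qed

lemma even_exp_factor_at_1: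
  fixes q :: complex
  assumes "q \<noteq> 0" "q - 1 \<noteq> 0" "q - 2 \<noteq> 0"
  shows "(1 - 2 / q) * (1 + 2 * (q - 1) / ((q - 2) * (q - 1))) = 1"
proof -
  have "2 * (q - 1) / ((q - 2) * (q - 1)) = 2 / (q - 2)"
    using assms by (rule_tac nonzero_mult_divide_mult_cancel_right) simp
  moreover have "1 - 2 / q = (q - 2) / q" "1 + 2 / (q - 2) = q / (q - 2)"
    using assms by (simp_all add: field_simps)
  ultimately show ?thesis using assms by simp
qed

lemma hm_local_at_1:
  assumes p: "prime p"
  shows "hm_local p k 1 = of_real (prob_plus p + prob_minus p * (-1) ^ k)"
proof (cases "p = 2")
  case True
  then show ?thesis
    by (cases "even k") (simp_all add: hm_local_def hm_numer_def kappa_2adic_def hm_denom_def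
        prob_plus_def prob_minus_def)
next
  case False
  define q where "q = (of_nat p :: complex)"
  have q: "q \<noteq> 0" "q - 1 \<noteq> 0" "q - 2 \<noteq> 0" "q + 1 \<noteq> 0"
    using odd_prime_of_nat_ne[OF p False] by (simp_all add: q_def)
  have p0: "p > 0" using p prime_gt_0_nat by blast
  have denom: "hm_denom p 1 = (q + 1) / (q - 1)" using q by (simp add: hm_denom_def q_def field_simps)
  show ?thesis
  proof (cases "even k")
    case True
    have "even_exp_factor p 1 = 1"
      using even_exp_factor_at_1[OF q(1-3)] by (simp add: even_exp_factor_def q_def)
    then have "hm_local p k 1 = (q - 1) / (q + 1)"
      using True False q denom by (simp add: hm_local_def hm_numer_def)
    then show ?thesis
      using prob_plus_add_prob_minus[OF p0] True by (simp add: q_def)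
  next
    case False
    have "hm_local p k 1 = (-1 / q) / ((q + 1) / (q - 1))"
      using False \<open>p \<noteq> 2\<close> denom by (simp add: hm_local_def hm_numer_def q_def)
    also have "\<dots> = -((q - 1) / (q * (q + 1)))" using q by (simp add: field_simps)
    finally show ?thesis
      using prob_plus_diff_prob_minus[OF p0] False by (simp add: q_def)
  qed
qed

lemma even_exp_factor_has_deriv_at_1:
  assumes "prime p" "p \<noteq> 2"
  defines "q \<equiv> (of_nat p :: complex)"
  shows "(even_exp_factor p has_field_derivative
           (1 - 2 / q) * (-(2 * (q - 1) / (q - 2) * (q * Ln q)) / (q - 1)^2)) (at 1)"
proof -
  note q = odd_prime_of_nat_ne[OF assms(1,2), folded q_def]
  have "even_exp_factor p = (\<lambda>s. (1 - 2 / q) * (1 + (2 * (q - 1) / (q - 2)) / (q powr s - 1)))"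
    by (auto simp: even_exp_factor_def q_def fun_eq_iff divide_divide_eq_left)
  then show ?thesis using q
    by (auto intro!: derivative_eq_intros has_field_derivative_powr_right_comp simp: power2_eq_square)
       (simp add: mult_ac)
qed

text \<open>The quotient rule applied to \<^const>\<open>hm_local\<close> at an odd prime \<open>q\<close>, for odd and even
  exponents; \<open>L\<close> stands for \<open>ln q\<close>.\<close>

lemma divide_square_cancel:
  fixes a b c :: complex
  assumes "b \<noteq> 0" "c \<noteq> 0"
  shows "(a / b^2) / (c^2 / b^2) = a / c^2"
  using assms by (simp add: field_simps)

lemma quotient_rule_odd_exp:
  fixes q L :: complex
  assumes "q \<noteq> 0" "q - 1 \<noteq> 0" "q + 1 \<noteq> 0"
  shows "(0 * (1 + 2 / (q - 1)) - (-1 / q) * (-(2 * (q * L)) / (q - 1)^2))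
           / ((1 + 2 / (q - 1)) * (1 + 2 / (q - 1))) = -(2 * L / (q + 1)^2)"
proof -
  have denom: "1 + 2 / (q - 1) = (q + 1) / (q - 1)" using assms by (simp add: field_simps)
  have "0 * (1 + 2 / (q - 1)) - (-1 / q) * (-(2 * (q * L)) / (q - 1)^2) = (- 2 * L) / (q - 1)^2"
    using assms by (simp add: field_simps)
  moreover have "(1 + 2 / (q - 1)) * (1 + 2 / (q - 1)) = (q + 1)^2 / (q - 1)^2"
    unfolding denom by (simp add: power2_eq_square)
  ultimately show ?thesis using divide_square_cancel[of "q - 1" "q + 1" "-2 * L"] assms by simp
qed

lemma quotient_rule_even_exp:
  fixes q L :: complex
  assumes "q \<noteq> 0" "q - 1 \<noteq> 0" "q + 1 \<noteq> 0" "q - 2 \<noteq> 0"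
  shows "((1 - 2 / q) * (-(2 * (q - 1) / (q - 2) * (q * L)) / (q - 1)^2) * (1 + 2 / (q - 1))
          - ((1 - 2 / q) * (1 + 2 * (q - 1) / ((q - 2) * (q - 1)))) * (-(2 * (q * L)) / (q - 1)^2))
          / ((1 + 2 / (q - 1)) * (1 + 2 / (q - 1))) = -(2 * L / (q + 1)^2)"
proof -
  have denom: "1 + 2 / (q - 1) = (q + 1) / (q - 1)" using assms by (simp add: field_simps)
  have "(1 - 2 / q) * (-(2 * (q - 1) / (q - 2) * (q * L)) / (q - 1)^2) = -(2 * L * (q - 1)) / (q - 1)^2"
    using assms by (simp add: field_simps)
  moreover have "-(2 * L * (q - 1)) / (q - 1)^2 * ((q + 1) / (q - 1)) - 1 * (-(2 * (q * L)) / (q - 1)^2)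
      = (-2 * L) / (q - 1)^2"
  proof -
    have "-(2 * L * (q - 1)) / (q - 1)^2 * ((q + 1) / (q - 1)) = -(2 * L * (q + 1)) / (q - 1)^2"
      using assms by (simp add: power2_eq_square)
    then show ?thesis by (simp add: diff_divide_distrib[symmetric] add_divide_distrib[symmetric] algebra_simps)
  qed
  moreover have "(1 + 2 / (q - 1)) * (1 + 2 / (q - 1)) = (q + 1)^2 / (q - 1)^2"
    unfolding denom by (simp add: power2_eq_square)
  ultimately show ?thesis
    unfolding even_exp_factor_at_1[OF assms(1,2,4)] denom
    using divide_square_cancel[of "q - 1" "q + 1" "-2 * L"] assms by simp
qed

lemma hm_local_2_has_deriv_at_1:
  "(hm_local 2 k has_field_derivative of_real (deriv_plus 2 + deriv_minus 2 * (-1) ^ k)) (at 1)"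
proof (cases "even k")
  case True
  have "(hm_local 2 k has_field_derivative -(of_real (ln 2) / 18)) (at 1)"
    unfolding hm_local_def hm_numer_def kappa_2adic_def hm_denom_def using True
    by (auto intro!: derivative_eq_intros has_field_derivative_powr_right_comp simp: Ln_powers_of_2)
  then show ?thesis using True by (simp add: deriv_plus_def deriv_minus_def)
next
  case False
  have "(hm_local 2 k has_field_derivative -(11 * of_real (ln 2) / 36)) (at 1)"
    unfolding hm_local_def hm_numer_def kappa_2adic_def hm_denom_def using False
    by (auto intro!: derivative_eq_intros has_field_derivative_powr_right_comp simp: Ln_powers_of_2)
  then show ?thesis using False by (simp add: deriv_plus_def deriv_minus_def)
qed

lemma hm_local_has_deriv_at_1:
  assumes p: "prime p"
  shows "(hm_local p k has_field_derivative of_real (deriv_plus p + deriv_minus p * (-1) ^ k)) (at 1)"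
proof (cases "p = 2")
  case True
  then show ?thesis using hm_local_2_has_deriv_at_1 by simp
next
  case False
  define q where "q = (of_nat p :: complex)"
  have q: "q \<noteq> 0" "q - 1 \<noteq> 0" "q + 1 \<noteq> 0" "q - 2 \<noteq> 0"
    using odd_prime_of_nat_ne[OF p False] by (simp_all add: q_def)
  have denom_deriv: "(hm_denom p has_field_derivative -(2 * (q * Ln q)) / (q - 1)^2) (at 1)"
    unfolding q_def by (rule hm_denom_has_deriv_at_1[OF prime_ge_2_nat[OF p]])
  have denom: "hm_denom p 1 = 1 + 2 / (q - 1)" "hm_denom p 1 \<noteq> 0"
    using q by (simp_all add: hm_denom_def q_def field_simps)
  have "of_real (deriv_plus p + deriv_minus p * (-1) ^ k) = -(2 * Ln q / (q + 1)^2)"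
    using False Ln_of_real[of "real p"] prime_gt_0_nat[OF p]
    by (simp add: deriv_plus_def deriv_minus_def q_def)
  moreover have "(hm_local p k has_field_derivative -(2 * Ln q / (q + 1)^2)) (at 1)"
  proof (cases "even k")
    case True
    have "hm_local p k = (\<lambda>s. even_exp_factor p s / hm_denom p s)"
      using True False by (simp add: fun_eq_iff hm_local_def hm_numer_def)
    then have "(hm_local p k has_field_derivative
        ((1 - 2 / q) * (-(2 * (q - 1) / (q - 2) * (q * Ln q)) / (q - 1)^2) * hm_denom p 1
          - even_exp_factor p 1 * (-(2 * (q * Ln q)) / (q - 1)^2)) / (hm_denom p 1 * hm_denom p 1)) (at 1)"
      using DERIV_divide[OF even_exp_factor_has_deriv_at_1[OF p False, folded q_def] denom_deriv denom(2)]
      by simp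
    moreover have "even_exp_factor p 1 = (1 - 2 / q) * (1 + 2 * (q - 1) / ((q - 2) * (q - 1)))"
      by (simp add: even_exp_factor_def q_def)
    ultimately show ?thesis unfolding denom(1) by (simp only: quotient_rule_even_exp[OF q])
  next
    case odd: False
    have hm_local_eq: "hm_local p k = (\<lambda>s. (-1 / q) / hm_denom p s)"
      using odd False by (simp add: fun_eq_iff hm_local_def hm_numer_def q_def)
    have "(hm_local p k has_field_derivative
        (0 * hm_denom p 1 - (-1 / q) * (-(2 * (q * Ln q)) / (q - 1)^2)) / (hm_denom p 1 * hm_denom p 1)) (at 1)"
      unfolding hm_local_eq by (rule DERIV_divide[OF DERIV_const denom_deriv denom(2)])
    then show ?thesis unfolding denom(1) by (simp only: quotient_rule_odd_exp[OF q(1-3)])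
  qed
  ultimately show ?thesis by simp
qed

section \<open>The Dirichlet series\<close>

lemma dz_div_eq_prod:
  assumes "m > 0"
  shows "dz z m / of_nat m
           = (\<Prod>p\<in>prime_factors m. neg_binom_coeff z (multiplicity p m) / of_nat p ^ multiplicity p m)"
proof -
  have "(of_nat m :: complex) = (\<Prod>p\<in>prime_factors m. of_nat p ^ multiplicity p m)"
    using assms by (simp flip: of_nat_prod of_nat_power add: prod_prime_factors)
  then show ?thesis unfolding dz_def neg_binom_coeff_def by (simp only: prod_dividef)
qed

lemma euler_factor_eq:
  "prime p \<Longrightarrow> k \<ge> 1 \<Longrightarrow> euler_factor z p k = neg_binom_coeff z k / of_nat p ^ k * hm_local p k 1"
  by (simp add: euler_factor_def local_term_def hm_local_at_1)

lemma euler_factor_deriv_eq: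
  "k \<ge> 1 \<Longrightarrow> euler_factor_deriv z p k
     = neg_binom_coeff z k / of_nat p ^ k * of_real (deriv_plus p + deriv_minus p * (-1) ^ k)"
  by (simp add: euler_factor_deriv_def local_term_def)

lemma prime_factor_multiplicity_ge_1:
  assumes "p \<in> prime_factors m"
  shows "prime p" "multiplicity p m \<ge> 1"
proof -
  show "prime p" using assms by auto
  have "multiplicity p m > 0" using assms by (auto simp: prime_factors_multiplicity)
  then show "multiplicity p m \<ge> 1" by simp
qed

lemma dz_div_mult_hm_1:
  assumes m: "m > 0"
  shows "dz z m / of_nat m * hm m 1 = multiplicative_fun (euler_factor z) m"
  unfolding dz_div_eq_prod[OF m] hm_eq_prod_hm_local[OF m] multiplicative_fun_def prod.distrib[symmetric]
proof (rule prod.cong)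
  fix p assume "p \<in> prime_factors m"
  from prime_factor_multiplicity_ge_1[OF this]
  show "neg_binom_coeff z (multiplicity p m) / of_nat p ^ multiplicity p m * hm_local p (multiplicity p m) 1
      = euler_factor z p (multiplicity p m)"
    by (simp add: euler_factor_eq)
qed simp

lemma Hm_eq:
  "m > 0 \<Longrightarrow> Hm m
     = (\<lambda>s. two_adic_factor s * (\<Prod>p\<in>prime_factors m. hm_local p (multiplicity p m) s) / zeta (2 * s))"
  by (simp add: fun_eq_iff Hm_def two_adic_factor_def hm_eq_prod_hm_local)

lemma zeta_2s_has_deriv_at_1: "((\<lambda>s. zeta (2 * s)) has_field_derivative deriv zeta 2 * 2) (at 1)"
proof -
  have "(zeta has_field_derivative deriv zeta 2) (at (2 * 1))" using zeta_has_field_derivative_2 by simp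
  moreover have "((\<lambda>s::complex. 2 * s) has_field_derivative 2) (at 1)" by (auto intro!: derivative_eq_intros)
  ultimately show ?thesis using DERIV_chain2 by fastforce
qed

lemma has_deriv_prod_hm_local_at_1:
  assumes m: "m > 0"
  obtains h' where "((\<lambda>s. \<Prod>p\<in>prime_factors m. hm_local p (multiplicity p m) s) has_field_derivative h') (at 1)"
    and "dz z m / of_nat m * h' = multiplicative_fun_deriv (euler_factor z) (euler_factor_deriv z) m"
proof
  define A where "A = prime_factors m"
  define v where "v p = multiplicity p m" for p
  define cf where "cf p = neg_binom_coeff z (v p) / of_nat p ^ v p" for p
  define d where "d p = complex_of_real (deriv_plus p + deriv_minus p * (-1) ^ v p)" for p
  define h' where "h' = (\<Sum>p\<in>A. d p * (\<Prod>q\<in>A - {p}. hm_local q (v q) 1))"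
  have A: "\<And>p. p \<in> A \<Longrightarrow> prime p \<and> v p \<ge> 1"
    using prime_factor_multiplicity_ge_1 unfolding A_def v_def by blast
  show "((\<lambda>s. \<Prod>p\<in>prime_factors m. hm_local p (multiplicity p m) s) has_field_derivative h') (at 1)"
    unfolding h'_def d_def A_def v_def
    by (rule has_field_derivative_prod) (use A[unfolded A_def v_def] hm_local_has_deriv_at_1 in auto)
  have "(\<Prod>q\<in>A. cf q) * (d p * (\<Prod>q\<in>A - {p}. hm_local q (v q) 1))
      = deriv_term (euler_factor z) (euler_factor_deriv z) p m" if p: "p \<in> A" for p
  proof -
    have "(\<Prod>q\<in>A. cf q) * (d p * (\<Prod>q\<in>A - {p}. hm_local q (v q) 1))
        = (cf p * d p) * (\<Prod>q\<in>A - {p}. cf q * hm_local q (v q) 1)"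
      using prod.remove[OF _ p, of cf] by (simp add: A_def prod.distrib mult_ac)
    also have "\<dots> = euler_factor_deriv z p (v p) * (\<Prod>q\<in>A - {p}. euler_factor z q (v q))"
    proof (intro arg_cong2[where f = "(*)"] prod.cong refl)
      show "cf p * d p = euler_factor_deriv z p (v p)"
        using A[OF p] by (simp add: cf_def d_def euler_factor_deriv_eq)
      show "cf q * hm_local q (v q) 1 = euler_factor z q (v q)" if "q \<in> A - {p}" for q
        using A that by (simp add: cf_def euler_factor_eq)
    qed
    finally show ?thesis by (simp add: deriv_term_def A_def v_def)
  qed
  then show "dz z m / of_nat m * h' = multiplicative_fun_deriv (euler_factor z) (euler_factor_deriv z) m"
    unfolding dz_div_eq_prod[OF m] h'_def multiplicative_fun_deriv_def sum_distrib_left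
    by (intro sum.cong) (auto simp: A_def v_def cf_def)
qed

lemma dz_div_mult_deriv_Hm_1:
  assumes m: "m > 0"
  shows "dz z m / of_nat m * deriv (Hm m) 1 =
     (-(of_real (ln 2) / 2) / zeta 2 - 2 * deriv zeta 2 / (zeta 2 * zeta 2)) * multiplicative_fun (euler_factor z) m
     + multiplicative_fun_deriv (euler_factor z) (euler_factor_deriv z) m / zeta 2"
proof -
  obtain h' where h': "((\<lambda>s. \<Prod>p\<in>prime_factors m. hm_local p (multiplicity p m) s) has_field_derivative h') (at 1)"
    and dz_h': "dz z m / of_nat m * h' = multiplicative_fun_deriv (euler_factor z) (euler_factor_deriv z) m"
    using has_deriv_prod_hm_local_at_1[OF m] .
  define h where "h = hm m 1"
  have "((\<lambda>s. two_adic_factor s * (\<Prod>p\<in>prime_factors m. hm_local p (multiplicity p m) s) / zeta (2 * s))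
      has_field_derivative ((-(of_real (ln 2) / 2) * h + h' * two_adic_factor 1) * zeta (2 * 1)
        - two_adic_factor 1 * h * (deriv zeta 2 * 2)) / (zeta (2 * 1) * zeta (2 * 1))) (at 1)"
    unfolding h_def hm_eq_prod_hm_local[OF m] using zeta_2_nonzero
    by (intro DERIV_divide DERIV_mult two_adic_factor_has_deriv_at_1 zeta_2s_has_deriv_at_1 h') auto
  then have "deriv (Hm m) 1 = ((-(of_real (ln 2) / 2) * h + h') * zeta 2 - h * (deriv zeta 2 * 2))
      / (zeta 2 * zeta 2)"
    unfolding Hm_eq[OF m] by (simp add: DERIV_imp_deriv two_adic_factor_1)
  then have "dz z m / of_nat m * deriv (Hm m) 1
      = ((-(of_real (ln 2) / 2) * (dz z m / of_nat m * h) + dz z m / of_nat m * h') * zeta 2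
          - (dz z m / of_nat m * h) * (deriv zeta 2 * 2)) / (zeta 2 * zeta 2)"
    by (simp add: times_divide_eq_right algebra_simps)
  then show ?thesis
    unfolding h_def dz_div_mult_hm_1[OF m] dz_h' using zeta_2_nonzero by (simp add: field_simps)
qed

definition EL_except :: "complex \<Rightarrow> nat \<Rightarrow> complex" where
  "EL_except z p = (\<Prod>q. if prime q \<and> q \<noteq> p then EXp q z else 1)"

lemma infsum_euler_factor: "prime p \<Longrightarrow> infsum (euler_factor z p) UNIV = EXp p z"
  using has_sum_euler_factor[OF prime_ge_2_nat] by (rule infsumI)

lemma norm_EXp_minus_1_le: "norm ((if prime n then EXp n z else 1) - 1) \<le> local_bound z n"
  using euler_factors.norm_local_sum_minus_1_le[OF euler_factor_derivs.axioms(1)[OF euler_factor_derivs_EXp]]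
  by (simp add: infsum_euler_factor cong: if_cong)

lemma EL_eq_EXp_mult_EL_except:
  assumes "prime p"
  shows "EL z = EXp p z * EL_except z p"
proof -
  have "(\<lambda>n. if prime n then EXp n z else 1)(p := 1) = (\<lambda>q. if prime q \<and> q \<noteq> p then EXp q z else 1)"
    by (auto simp: fun_eq_iff)
  then show ?thesis
    using prodinf_eq_mult_prodinf_fun_upd[OF norm_EXp_minus_1_le summable_local_bound local_bound_nonneg, of z p]
      assms
    by (simp add: EL_def EL_except_def)
qed

lemma EL_nonzero: "(\<And>p. prime p \<Longrightarrow> EXp p z \<noteq> 0) \<Longrightarrow> EL z \<noteq> 0"
  unfolding EL_def
  by (rule prodinf_nonzero[OF convergent_prod_if_norm_minus_1_le[OF norm_EXp_minus_1_le summable_local_bound]])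
     auto

theorem has_sum_Hm_1: "((\<lambda>m. dz z m / of_nat m * Hm m 1) has_sum EL z / zeta 2) {0<..}"
proof -
  interpret euler_factor_derivs "euler_factor z" "local_bound z" "euler_factor_deriv z"
    by (rule euler_factor_derivs_EXp)
  have "(multiplicative_fun (euler_factor z) has_sum EL z) {0<..}"
    using has_sum_multiplicative_fun by (simp add: EL_def infsum_euler_factor cong: if_cong)
  then show ?thesis
    by (subst has_sum_cong[where g = "\<lambda>m. multiplicative_fun (euler_factor z) m / zeta 2"])
       (auto simp: Hm_def dz_div_mult_hm_1[symmetric] intro: has_sum_divide_const)
qed

lemma powr_uminus_half: "complex_of_real (1 - 1 / real 2) powr (-z) = 2 powr z"
proof -
  have "Ln (inverse (2::complex)) = - Ln 2"
    by (rule Ln_inverse) (simp add: complex_nonpos_Reals_iff)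
  then show ?thesis by (simp add: powr_def)
qed

lemma powr_uminus_three_halves: "complex_of_real (1 + 1 / real 2) powr (-z) = (2/3) powr z"
proof -
  have "complex_of_real (1 + 1 / real 2) = inverse (2/3)" by simp
  moreover have "Ln (inverse (2/3::complex)) = - Ln (2/3)"
    by (rule Ln_inverse) (simp add: complex_nonpos_Reals_iff)
  ultimately show ?thesis by (simp add: powr_def)
qed

lemma EXp_2: "EXp 2 z = 2 powr z / 12 + (2/3) powr z / 4 + 2/3"
proof -
  have "EXp 2 z = of_real (1/12) * complex_of_real (1 - 1 / real 2) powr (-z)
      + of_real (1/4) * complex_of_real (1 + 1 / real 2) powr (-z) + of_real (2/3)"
    unfolding EXp_def by (simp add: power2_eq_square)
  then show ?thesis unfolding powr_uminus_half powr_uminus_three_halves by simp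
qed

text \<open>At \<open>p = 2\<close> the logarithmic derivative of the factor \<^const>\<open>two_adic_factor\<close> combines with
  the local derivative series into the \<open>p = 2\<close> term of \<^const>\<open>phi\<close>.\<close>

lemma two_adic_deriv_term:
  "-(of_real (ln 2) / 2) * EXp 2 z + infsum (euler_factor_deriv z 2) UNIV
     = - (of_real (ln 2 / 9) * (4 * 2 powr z + 5) / 2)"
  unfolding infsumI[OF has_sum_euler_factor_deriv_2] EXp_2 powr_uminus_half powr_uminus_three_halves
  by (simp add: deriv_plus_def deriv_minus_def field_simps)

lemma infsum_euler_factor_deriv_odd: "p \<ge> 3 \<Longrightarrow> infsum (euler_factor_deriv z p) UNIV = aphi p z"
  using has_sum_euler_factor_deriv_odd by (rule infsumI)

lemma has_sum_multiplicative_fun_deriv_EXp: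
  fixes z :: complex
  defines "S \<equiv> (\<lambda>n. if prime n \<and> n \<ge> 3 then aphi n z * EL_except z n else 0)"
  shows "summable S"
    and "(multiplicative_fun_deriv (euler_factor z) (euler_factor_deriv z) has_sum
           infsum (euler_factor_deriv z 2) UNIV * EL_except z 2 + suminf S) {0<..}"
proof -
  interpret euler_factor_derivs "euler_factor z" "local_bound z" "euler_factor_deriv z"
    by (rule euler_factor_derivs_EXp)
  define T where "T p = infsum (euler_factor_deriv z p) UNIV * EL_except z p" for p
  obtain X where X: "(multiplicative_fun_deriv (euler_factor z) (euler_factor_deriv z) has_sum X) {0<..}"
    and "((\<lambda>p. infsum (euler_factor_deriv z p) UNIV
           * prodinf (\<lambda>q. if prime q \<and> q \<noteq> p then infsum (euler_factor z q) UNIV else 1))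
         has_sum X) {p. prime p}"
    by (rule has_sum_multiplicative_fun_deriv)
  then have T: "(T has_sum X) {p. prime p}"
    by (simp add: T_def[abs_def] EL_except_def infsum_euler_factor cong: if_cong)
  have "p = 2 \<or> p \<ge> 3" if "prime p" for p :: nat
    using prime_ge_2_nat[OF that] by linarith
  then have primes: "{p::nat. prime p} = insert 2 {p. prime p \<and> p \<ge> 3}" by auto
  have "T summable_on {p. prime p \<and> p \<ge> 3}"
    using has_sum_imp_summable[OF T] by (rule summable_on_subset_banach) auto
  then have T3: "(T has_sum infsum T {p. prime p \<and> p \<ge> 3}) {p. prime p \<and> p \<ge> 3}"
    by (rule has_sum_infsum)
  then have "(S has_sum infsum T {p. prime p \<and> p \<ge> 3}) UNIV"
    by (subst (asm) has_sum_cong_neutral[where T = UNIV and g = S])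
       (auto simp: S_def T_def infsum_euler_factor_deriv_odd)
  then have "S sums infsum T {p. prime p \<and> p \<ge> 3}" by (rule has_sum_imp_sums)
  then have S_sum: "summable S" "suminf S = infsum T {p. prime p \<and> p \<ge> 3}" by (auto simp: sums_iff)
  then show "summable S" by simp
  have "(T has_sum T 2 + infsum T {p. prime p \<and> p \<ge> 3}) {p. prime p}"
    unfolding primes by (rule has_sum_insert[OF _ T3]) simp
  then show "(multiplicative_fun_deriv (euler_factor z) (euler_factor_deriv z) has_sum
      infsum (euler_factor_deriv z 2) UNIV * EL_except z 2 + suminf S) {0<..}"
    using X has_sum_unique[OF T] S_sum(2) by (simp add: T_def)
qed

lemma EL_phi_eq:
  fixes z :: complex
  defines "S \<equiv> (\<lambda>n. if prime n \<and> n \<ge> 3 then aphi n z * EL_except z n else 0)"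
  assumes "summable S"
  shows "EL_phi z = suminf S - of_real (ln 2 / 9) * (4 * 2 powr z + 5) / 2 * EL_except z 2
           + (- 2 * deriv zeta 2 / zeta 2 + 2 * euler_mascheroni) * EL z"
proof (cases "\<forall>p. prime p \<longrightarrow> EXp p z \<noteq> 0")
  case False
  then show ?thesis unfolding EL_phi_def S_def EL_except_def by (rule if_not_P)
next
  case True
  then have EL: "EL z \<noteq> 0" by (intro EL_nonzero) auto
  have "(if prime n \<and> n \<ge> 3 then aphi n z / EXp n z else 0) = S n / EL z" for n
    using True EL EL_eq_EXp_mult_EL_except[of n z] by (auto simp: S_def field_simps)
  then have "(\<lambda>n. if prime n \<and> n \<ge> 3 then aphi n z / EXp n z else 0) sums (suminf S / EL z)"
    using sums_divide[OF summable_sums[OF assms(2)]] by simp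
  moreover have "EL z = EXp 2 z * EL_except z 2" "EXp 2 z \<noteq> 0"
    using True EL_eq_EXp_mult_EL_except[of 2 z] by auto
  moreover have "1/6 * 2 powr z + 1/2 * (2/3) powr z + 4/3 = 2 * EXp 2 z"
    unfolding EXp_2 by (simp add: field_simps)
  ultimately show ?thesis
    using True EL by (simp add: EL_phi_def phi_def sums_iff field_simps)
qed

theorem has_sum_deriv_Hm_1:
  "((\<lambda>m. dz z m / of_nat m * deriv (Hm m) 1) has_sum (EL_phi z - 2 * euler_mascheroni * EL z) / zeta 2)
     {0<..}"
proof -
  interpret euler_factor_derivs "euler_factor z" "local_bound z" "euler_factor_deriv z"
    by (rule euler_factor_derivs_EXp)
  define S where "S = (\<lambda>n. if prime n \<and> n \<ge> 3 then aphi n z * EL_except z n else 0)"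
  define c where "c = -(of_real (ln 2) / 2) / zeta 2 - 2 * deriv zeta 2 / (zeta 2 * zeta 2)"
  have "(multiplicative_fun (euler_factor z) has_sum EL z) {0<..}"
    using has_sum_multiplicative_fun by (simp add: EL_def infsum_euler_factor cong: if_cong)
  then have "((\<lambda>m. c * multiplicative_fun (euler_factor z) m
      + multiplicative_fun_deriv (euler_factor z) (euler_factor_deriv z) m / zeta 2)
      has_sum c * EL z + (infsum (euler_factor_deriv z 2) UNIV * EL_except z 2 + suminf S) / zeta 2) {0<..}"
    using has_sum_multiplicative_fun_deriv_EXp(2)[of z]
    by (intro has_sum_add has_sum_cmult_right has_sum_divide_const) (simp_all add: S_def)
  moreover have "c * EL z + (infsum (euler_factor_deriv z 2) UNIV * EL_except z 2 + suminf S) / zeta 2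
      = ((-(of_real (ln 2) / 2) * EXp 2 z + infsum (euler_factor_deriv z 2) UNIV) * EL_except z 2 + suminf S)
          / zeta 2 - 2 * deriv zeta 2 / (zeta 2 * zeta 2) * EL z"
    using EL_eq_EXp_mult_EL_except[of 2 z] zeta_2_nonzero by (simp add: c_def field_simps)
  also have "\<dots> = (EL_phi z - 2 * euler_mascheroni * EL z) / zeta 2"
    unfolding two_adic_deriv_term EL_phi_eq[OF has_sum_multiplicative_fun_deriv_EXp(1)]
    using zeta_2_nonzero by (simp add: S_def field_simps)
  moreover have "dz z m / of_nat m * deriv (Hm m) 1 = c * multiplicative_fun (euler_factor z) m
      + multiplicative_fun_deriv (euler_factor z) (euler_factor_deriv z) m / zeta 2" if "m \<in> {0<..}" for m
    using that dz_div_mult_deriv_Hm_1[of m z] unfolding c_def by simp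
  ultimately show ?thesis by (subst has_sum_cong) auto
qed

theorem lemma22:
  fixes z :: complex
  shows "(\<lambda>m. dz z (Suc m) / of_nat (Suc m) * Hm (Suc m) 1) sums (EL z / zeta 2)
       \<and> (\<lambda>m. dz z (Suc m) / of_nat (Suc m) * deriv (Hm (Suc m)) 1) sums
            ((EL_phi z - 2 * euler_mascheroni * EL z) / zeta 2)"
  using has_sum_imp_sums_Suc[OF has_sum_Hm_1] has_sum_imp_sums_Suc[OF has_sum_deriv_Hm_1] by blast

end
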